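(* Let $(W,\lambda)$ be an initial algebra of $N\otimes-$ on $\mathsf{SquaMS}$ and $V=C(W)$ its Cauchy completion. Then $V$ is isomorphic (in $\mathsf{SquaMS}$) to $U_0$ with the taxicab metric.
   Context: Let $M_0=\{(r,s)\in[0,1]^2: r\in\{0,1\}\text{ or } s\in\{0,1\}\}$. A square metric space is a pair $(X,S_X)$ with $X$ a metric space with all distances at most $2$ and $S_X\colon M_0\to X$ injective such that (sq1) for $i\in\{0,1\}$, $r,s\in[0,1]$: $d_X(S_X(i,r),S_X(i,s))=|s-r|$ and $d_X(S_X(r,i),S_X(s,i))=|s-r|$; (sq2) $d_X(S_X(r,s),S_X(t,u))\ge|r-t|+|s-u|$. $\mathsf{SquaMS}$: these objects, with short maps $f$ satisfying $f\circ S_X=S_Y$ as morphisms. Let $N=\{0,1,2\}^2$, also viewed as points of $\mathbb{R}^2$. For $X$ in $\mathsf{SquaMS}$, $N\otimes X=(N\times X)/\!\sim$, where $\sim$ is generated by $(m,S_X(p))\sim(n,S_X(q))$ whenever $m,n\in N$ differ by exactly $1$ in exactly one coordinate and $(m+p)/3=(n+q)/3$; $n\otimes x$ is the class of $(n,x)$. With $d((a,u),(b,v))=\frac13 d_X(u,v)$ if $a=b$ and $2$ otherwise, $N\otimes X$ gets the quotient metric. $S_{N\otimes X}(p)=n\otimes S_X(3p-n)$ for any $n\in N$ with $p\in(n+[0,1]^2)/3$; $(N\otimes f)(n\otimes x)=n\otimes f(x)$. The Cauchy completion $C(X)$ has $S_{C(X)}(p)$ the class of the constant sequence $S_X(p)$.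 $U_0=[0,1]^2$ with the taxicab metric $|x-x'|+|y-y'|$ and $S_{U_0}$ the inclusion of $M_0$. *)

theory Defs
  imports "HOL-Analysis.Analysis"
begin

definition metric_on :: "'a set \<Rightarrow> ('a \<Rightarrow> 'a \<Rightarrow> real) \<Rightarrow> bool" where
  "metric_on X d \<longleftrightarrow>
     (\<forall>x\<in>X. \<forall>y\<in>X. 0 \<le> d x y \<and> d x y = d y x \<and> (d x y = 0 \<longleftrightarrow> x = y)) \<and>
     (\<forall>x\<in>X. \<forall>y\<in>X. \<forall>z\<in>X. d x z \<le> d x y + d y z)"

definition M0 :: "(real \<times> real) set" where
  "M0 = {(r, s). 0 \<le> r \<and> r \<le> 1 \<and> 0 \<le> s \<and> s \<le> 1 \<and> (r \<in> {0, 1} \<or> s \<in> {0, 1})}"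

definition square_ms :: "'a set \<Rightarrow> ('a \<Rightarrow> 'a \<Rightarrow> real) \<Rightarrow> (real \<times> real \<Rightarrow> 'a) \<Rightarrow> bool" where
  "square_ms X d S \<longleftrightarrow>
     metric_on X d \<and> (\<forall>x\<in>X. \<forall>y\<in>X. d x y \<le> 2) \<and>
     S ` M0 \<subseteq> X \<and> inj_on S M0 \<and>
     (\<forall>i\<in>{0, 1}. \<forall>r\<in>{0..1}. \<forall>s\<in>{0..1}.
        d (S (i, r)) (S (i, s)) = \<bar>s - r\<bar> \<and> d (S (r, i)) (S (s, i)) = \<bar>s - r\<bar>) \<and>
     (\<forall>p\<in>M0. \<forall>q\<in>M0. d (S p) (S q) \<ge> \<bar>fst p - fst q\<bar> + \<bar>snd p - snd q\<bar>)"

definition sq_hom :: "'a set \<Rightarrow> ('a \<Rightarrow> 'a \<Rightarrow> real) \<Rightarrow> (real \<times> real \<Rightarrow> 'a) \<Rightarrow>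
    'b set \<Rightarrow> ('b \<Rightarrow> 'b \<Rightarrow> real) \<Rightarrow> (real \<times> real \<Rightarrow> 'b) \<Rightarrow> ('a \<Rightarrow> 'b) \<Rightarrow> bool" where
  "sq_hom X d S Y e T f \<longleftrightarrow>
     f ` X \<subseteq> Y \<and> (\<forall>x\<in>X. \<forall>y\<in>X. e (f x) (f y) \<le> d x y) \<and> (\<forall>p\<in>M0. f (S p) = T p)"

definition sq_isomorphic :: "'a set \<Rightarrow> ('a \<Rightarrow> 'a \<Rightarrow> real) \<Rightarrow> (real \<times> real \<Rightarrow> 'a) \<Rightarrow>
    'b set \<Rightarrow> ('b \<Rightarrow> 'b \<Rightarrow> real) \<Rightarrow> (real \<times> real \<Rightarrow> 'b) \<Rightarrow> bool" where
  "sq_isomorphic X d S Y e T \<longleftrightarrow>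
     (\<exists>f g. sq_hom X d S Y e T f \<and> sq_hom Y e T X d S g \<and>
            (\<forall>x\<in>X. g (f x) = x) \<and> (\<forall>y\<in>Y. f (g y) = y))"

definition Nset :: "(nat \<times> nat) set" where
  "Nset = {0, 1, 2} \<times> {0, 1, 2}"

definition adjN :: "nat \<times> nat \<Rightarrow> nat \<times> nat \<Rightarrow> bool" where
  "adjN m n \<longleftrightarrow>
     (fst m = fst n \<and> (snd m = snd n + 1 \<or> snd n = snd m + 1)) \<or>
     (snd m = snd n \<and> (fst m = fst n + 1 \<or> fst n = fst m + 1))"

definition gen_rel :: "(real \<times> real \<Rightarrow> 'a) \<Rightarrow> (((nat \<times> nat) \<times> 'a) \<times> ((nat \<times> nat) \<times> 'a)) set" where
  "gen_rel S = {((m, S p), (n, S q)) | m n p q.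
       m \<in> Nset \<and> n \<in> Nset \<and> adjN m n \<and> p \<in> M0 \<and> q \<in> M0 \<and>
       real (fst m) + fst p = real (fst n) + fst q \<and>
       real (snd m) + snd p = real (snd n) + snd q}"

definition tens_eq :: "(real \<times> real \<Rightarrow> 'a) \<Rightarrow> (((nat \<times> nat) \<times> 'a) \<times> ((nat \<times> nat) \<times> 'a)) set" where
  "tens_eq S = (gen_rel S \<union> (gen_rel S)\<inverse>)\<^sup>*"

definition tens_car :: "'a set \<Rightarrow> (real \<times> real \<Rightarrow> 'a) \<Rightarrow> ((nat \<times> nat) \<times> 'a) set set" where
  "tens_car X S = (Nset \<times> X) // tens_eq S"

definition base_dist :: "('a \<Rightarrow> 'a \<Rightarrow> real) \<Rightarrow> (nat \<times> nat) \<times> 'a \<Rightarrow> (nat \<times> nat) \<times> 'a \<Rightarrow> real" where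
  "base_dist d x y = (if fst x = fst y then d (snd x) (snd y) / 3 else 2)"

definition tens_dist :: "'a set \<Rightarrow> ('a \<Rightarrow> 'a \<Rightarrow> real) \<Rightarrow> (real \<times> real \<Rightarrow> 'a) \<Rightarrow>
    ((nat \<times> nat) \<times> 'a) set \<Rightarrow> ((nat \<times> nat) \<times> 'a) set \<Rightarrow> real" where
  "tens_dist X d S A B = Inf {(\<Sum>i<n. base_dist d (p i) (q i)) | n p q.
       0 < n \<and> (\<forall>i<n. p i \<in> Nset \<times> X \<and> q i \<in> Nset \<times> X) \<and>
       p 0 \<in> A \<and> q (n - 1) \<in> B \<and>
       (\<forall>i. Suc i < n \<longrightarrow> (q i, p (Suc i)) \<in> tens_eq S)}"

definition tens_S :: "(real \<times> real \<Rightarrow> 'a) \<Rightarrow> real \<times> real \<Rightarrow> ((nat \<times> nat) \<times> 'a) set" where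
  "tens_S S p = (let n = (SOME n. n \<in> Nset \<and>
                      real (fst n) / 3 \<le> fst p \<and> fst p \<le> (real (fst n) + 1) / 3 \<and>
                      real (snd n) / 3 \<le> snd p \<and> snd p \<le> (real (snd n) + 1) / 3)
                 in tens_eq S `` {(n, S (3 * fst p - real (fst n), 3 * snd p - real (snd n)))})"

definition tens_map :: "(real \<times> real \<Rightarrow> 'b) \<Rightarrow> ('a \<Rightarrow> 'b) \<Rightarrow>
    ((nat \<times> nat) \<times> 'a) set \<Rightarrow> ((nat \<times> nat) \<times> 'b) set" where
  "tens_map T f A = (let z = (SOME z. z \<in> A) in tens_eq T `` {(fst z, f (snd z))})"

definition is_alg :: "'a set \<Rightarrow> ('a \<Rightarrow> 'a \<Rightarrow> real) \<Rightarrow> (real \<times> real \<Rightarrow> 'a) \<Rightarrow>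
    (((nat \<times> nat) \<times> 'a) set \<Rightarrow> 'a) \<Rightarrow> bool" where
  "is_alg X d S lam \<longleftrightarrow> square_ms X d S \<and>
     sq_hom (tens_car X S) (tens_dist X d S) (tens_S S) X d S lam"

definition alg_hom :: "'a set \<Rightarrow> ('a \<Rightarrow> 'a \<Rightarrow> real) \<Rightarrow> (real \<times> real \<Rightarrow> 'a) \<Rightarrow>
    (((nat \<times> nat) \<times> 'a) set \<Rightarrow> 'a) \<Rightarrow>
    'b set \<Rightarrow> ('b \<Rightarrow> 'b \<Rightarrow> real) \<Rightarrow> (real \<times> real \<Rightarrow> 'b) \<Rightarrow>
    (((nat \<times> nat) \<times> 'b) set \<Rightarrow> 'b) \<Rightarrow> ('a \<Rightarrow> 'b) \<Rightarrow> bool" where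
  "alg_hom X d S lam Y e T mu h \<longleftrightarrow> sq_hom X d S Y e T h \<and>
     (\<forall>A\<in>tens_car X S. h (lam A) = mu (tens_map T h A))"

text \<open>Initial algebra, with initiality quantified over all algebras whose carrier lives in
  the same HOL type as the given one.\<close>

definition initial_alg :: "'a set \<Rightarrow> ('a \<Rightarrow> 'a \<Rightarrow> real) \<Rightarrow> (real \<times> real \<Rightarrow> 'a) \<Rightarrow>
    (((nat \<times> nat) \<times> 'a) set \<Rightarrow> 'a) \<Rightarrow> bool" where
  "initial_alg X d S lam \<longleftrightarrow> is_alg X d S lam \<and>
     (\<forall>(Y :: 'a set) e T mu. is_alg Y e T mu \<longrightarrow>
        (\<exists>h. alg_hom X d S lam Y e T mu h \<and>
             (\<forall>h'. alg_hom X d S lam Y e T mu h' \<longrightarrow> (\<forall>x\<in>X. h' x = h x))))"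

definition cauchy_seqs :: "'a set \<Rightarrow> ('a \<Rightarrow> 'a \<Rightarrow> real) \<Rightarrow> (nat \<Rightarrow> 'a) set" where
  "cauchy_seqs X d = {\<sigma>. (\<forall>n. \<sigma> n \<in> X) \<and>
      (\<forall>\<epsilon>>0. \<exists>N. \<forall>m\<ge>N. \<forall>n\<ge>N. d (\<sigma> m) (\<sigma> n) < \<epsilon>)}"

definition ceq :: "'a set \<Rightarrow> ('a \<Rightarrow> 'a \<Rightarrow> real) \<Rightarrow> ((nat \<Rightarrow> 'a) \<times> (nat \<Rightarrow> 'a)) set" where
  "ceq X d = {(\<sigma>, \<tau>). \<sigma> \<in> cauchy_seqs X d \<and> \<tau> \<in> cauchy_seqs X d \<and>
      (\<lambda>n. d (\<sigma> n) (\<tau> n)) \<longlonglongrightarrow> 0}"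

definition C_car :: "'a set \<Rightarrow> ('a \<Rightarrow> 'a \<Rightarrow> real) \<Rightarrow> (nat \<Rightarrow> 'a) set set" where
  "C_car X d = cauchy_seqs X d // ceq X d"

definition C_dist :: "('a \<Rightarrow> 'a \<Rightarrow> real) \<Rightarrow> (nat \<Rightarrow> 'a) set \<Rightarrow> (nat \<Rightarrow> 'a) set \<Rightarrow> real" where
  "C_dist d A B = lim (\<lambda>n. d ((SOME \<sigma>. \<sigma> \<in> A) n) ((SOME \<tau>. \<tau> \<in> B) n))"

definition C_S :: "'a set \<Rightarrow> ('a \<Rightarrow> 'a \<Rightarrow> real) \<Rightarrow> (real \<times> real \<Rightarrow> 'a) \<Rightarrow>
    real \<times> real \<Rightarrow> (nat \<Rightarrow> 'a) set" where
  "C_S X d S p = ceq X d `` {(\<lambda>n. S p)}"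

definition U0 :: "(real \<times> real) set" where
  "U0 = {0..1} \<times> {0..1}"

definition taxicab :: "real \<times> real \<Rightarrow> real \<times> real \<Rightarrow> real" where
  "taxicab x y = \<bar>fst x - fst y\<bar> + \<bar>snd x - snd y\<bar>"

end

theory Submission
  imports Defs
begin

text \<open>
  Initiality only produces maps into algebras carried by the type of \<open>W\<close>, but the square
  \<open>U0\<close> with the taxicab metric and the structure map \<open>n \<otimes> p \<mapsto> (n + p) / 3\<close> can be
  transported into that type. This gives a short map \<open>h : W \<rightarrow> U0\<close> fixing the boundary and
  commuting with the structure maps. Conversely \<open>\<lambda>\<close> is onto (Lambek), so every point of \<open>W\<close>
  is some \<open>\<lambda>(n \<otimes> x)\<close>. Self-similarity bounds the distance between opposite sides of the
  square by \<open>1\<close>, hence \<open>d \<le> taxicab\<close> on the boundary and then on the grid of thirds; with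
  this, a bound \<open>d x y \<le> taxicab (h x) (h y) + e\<close> on all of \<open>W\<close> improves to \<open>2e/3\<close>, so
  \<open>h\<close> is an isometry. Iterating \<open>\<lambda>\<close> puts points of its image within \<open>2 / 3^k\<close> of every
  point of the square, so the image is dense and the completion of \<open>W\<close> is \<open>U0\<close>.
\<close>

section \<open>The taxicab square\<close>

lemma taxicab_commute: "taxicab x y = taxicab y x"
  unfolding taxicab_def by linarith

lemma taxicab_triangle: "taxicab x z \<le> taxicab x y + taxicab y z"
  unfolding taxicab_def by linarith

lemma taxicab_nonneg: "0 \<le> taxicab x y"
  unfolding taxicab_def by linarith

lemma taxicab_eq_0_iff: "taxicab x y = 0 \<longleftrightarrow> x = y"
  unfolding taxicab_def by (cases x; cases y) auto

lemma taxicab_self [simp]: "taxicab x x = 0"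
  unfolding taxicab_def by simp

lemma taxicab_Pair [simp]: "taxicab (x, y) (x', y') = \<bar>x - x'\<bar> + \<bar>y - y'\<bar>"
  by (simp add: taxicab_def)

lemma taxicab_le_2: "x \<in> U0 \<Longrightarrow> y \<in> U0 \<Longrightarrow> taxicab x y \<le> 2"
  unfolding taxicab_def U0_def by (cases x; cases y) auto

lemma dist_le_taxicab: "dist x y \<le> taxicab x y"
proof -
  have "dist x y = sqrt ((fst x - fst y)\<^sup>2 + (snd x - snd y)\<^sup>2)"
    by (cases x; cases y) (simp add: dist_Pair_Pair dist_real_def)
  also have "\<dots> \<le> taxicab x y"
    unfolding taxicab_def by (rule sqrt_sum_squares_le_sum_abs)
  finally show ?thesis .
qed

lemma taxicab_le_2_dist: "taxicab x y \<le> 2 * dist x y"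
  using dist_fst_le[of x y] dist_snd_le[of x y] unfolding taxicab_def dist_real_def by linarith

lemma tendsto_taxicab [tendsto_intros]:
  "(f \<longlongrightarrow> a) F \<Longrightarrow> (g \<longlongrightarrow> b) F \<Longrightarrow> ((\<lambda>x. taxicab (f x) (g x)) \<longlongrightarrow> taxicab a b) F"
  unfolding taxicab_def by (intro tendsto_intros)

lemma tendsto_iff_taxicab: "(f \<longlongrightarrow> a) F \<longleftrightarrow> ((\<lambda>x. taxicab (f x) a) \<longlongrightarrow> 0) F"
proof
  assume "(f \<longlongrightarrow> a) F"
  from tendsto_taxicab[OF this tendsto_const[of a]]
  show "((\<lambda>x. taxicab (f x) a) \<longlongrightarrow> 0) F" by simp
next
  assume lim: "((\<lambda>x. taxicab (f x) a) \<longlongrightarrow> 0) F"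
  have "\<forall>x. norm (dist (f x) a) \<le> taxicab (f x) a" by (simp add: dist_le_taxicab)
  from Lim_null_comparison[OF always_eventually[OF this] lim]
  show "(f \<longlongrightarrow> a) F" by (rule tendsto_dist_iff[THEN iffD2])
qed

lemma closed_U0: "closed U0"
  unfolding U0_def by (intro closed_Times closed_atLeastAtMost)

lemma M0_subset_U0: "M0 \<subseteq> U0"
  unfolding M0_def U0_def by auto

lemma le_of_le_geometric:
  fixes a b c r :: real
  assumes "\<And>k. a \<le> b + c * r ^ k" and "0 \<le> r" and "r < 1"
  shows "a \<le> b"
proof -
  have "(\<lambda>k. b + c * r ^ k) \<longlonglongrightarrow> b + c * 0"
    using assms(2,3) by (intro tendsto_intros) simp
  then show ?thesis
    using assms(1) by (intro LIMSEQ_le_const[where X = "\<lambda>k. b + c * r ^ k"]) auto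
qed

lemma metric_on_commute: "metric_on X d \<Longrightarrow> x \<in> X \<Longrightarrow> y \<in> X \<Longrightarrow> d x y = d y x"
  unfolding metric_on_def by blast

lemma metric_on_triangle:
  "metric_on X d \<Longrightarrow> x \<in> X \<Longrightarrow> y \<in> X \<Longrightarrow> z \<in> X \<Longrightarrow> d x z \<le> d x y + d y z"
  unfolding metric_on_def by blast

lemma metric_on_subset:
  assumes "metric_on X d" "Y \<subseteq> X" shows "metric_on Y d"
  unfolding metric_on_def
proof (intro conjI ballI)
  fix x y z assume "x \<in> Y" "y \<in> Y" "z \<in> Y"
  then have "x \<in> X" "y \<in> X" "z \<in> X" using assms(2) by auto
  then show "d x z \<le> d x y + d y z" using assms(1) unfolding metric_on_def by blast
next
  fix x y assume "x \<in> Y" "y \<in> Y"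
  then have "x \<in> X" "y \<in> X" using assms(2) by auto
  then show "0 \<le> d x y" "d x y = d y x" "d x y = 0 \<longleftrightarrow> x = y"
    using assms(1) unfolding metric_on_def by blast+
qed

lemma triadic_approx:
  fixes t :: real assumes "0 \<le> t" "t \<le> 1"
  shows "\<exists>i::nat. i \<le> 3 ^ k \<and> \<bar>t - real i / 3 ^ k\<bar> \<le> (1 / 3) ^ k"
proof -
  define i where "i = nat \<lfloor>t * 3 ^ k\<rfloor>"
  have "real i = of_int \<lfloor>t * 3 ^ k\<rfloor>" unfolding i_def using assms by simp
  then have i: "real i \<le> t * 3 ^ k" "t * 3 ^ k - real i \<le> 1" by linarith+
  have "t * 3 ^ k \<le> 3 ^ k" using assms by simp
  then have "real i \<le> 3 ^ k" using i by linarith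
  then have "i \<le> 3 ^ k" by (metis of_nat_le_iff of_nat_numeral of_nat_power)
  moreover have "\<bar>t - real i / 3 ^ k\<bar> \<le> (1 / 3) ^ k"
  proof -
    have p: "(0::real) < 3 ^ k" by simp
    have "real i / 3 ^ k \<le> t" using i(1) p by (simp add: divide_le_eq)
    moreover have "(t * 3 ^ k - real i) / 3 ^ k \<le> 1 / 3 ^ k"
      using i(2) p by (simp add: divide_right_mono)
    then have "t - real i / 3 ^ k \<le> 1 / 3 ^ k" using p by (simp add: diff_divide_distrib)
    ultimately show ?thesis by (simp add: power_divide)
  qed
  ultimately show ?thesis by blast
qed

lemma common_third:
  fixes x y :: real
  assumes "0 \<le> x" "x \<le> y" "y \<le> 1" "\<not> (x < 1/3 \<and> 1/3 < y)" "\<not> (x < 2/3 \<and> 2/3 < y)"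
  obtains i :: nat
  where "i \<in> {0, 1, 2}" "x \<in> {real i / 3..(real i + 1) / 3}" "y \<in> {real i / 3..(real i + 1) / 3}"
proof -
  consider "y \<le> 1/3" | "1/3 \<le> x \<and> y \<le> 2/3" | "2/3 \<le> x" using assms by linarith
  then show ?thesis
  proof cases
    case 1 then show ?thesis using that[of 0] assms by simp
  next
    case 2 then show ?thesis using that[of 1] assms by simp
  next
    case 3 then show ?thesis using that[of 2] assms by simp
  qed
qed

lemma dist_le_if_le_on_thirds:
  fixes f :: "real \<Rightarrow> 'a"
  assumes met: "metric_on X d" and fD: "f ` D \<subseteq> X"
    and D: "D \<subseteq> {0..1}" "1/3 \<in> D" "2/3 \<in> D"
    and cell: "\<And>i x y. i \<in> {0, 1, 2::nat} \<Longrightarrow> x \<in> D \<Longrightarrow> y \<in> D \<Longrightarrow>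
      x \<in> {real i / 3..(real i + 1) / 3} \<Longrightarrow> y \<in> {real i / 3..(real i + 1) / 3} \<Longrightarrow>
      d (f x) (f y) \<le> \<bar>x - y\<bar>"
    and ab: "a \<in> D" "b \<in> D"
  shows "d (f a) (f b) \<le> \<bar>a - b\<bar>"
proof -
  have X: "f x \<in> X" if "x \<in> D" for x using fD that by blast
  have step: "d (f x) (f y) \<le> y - x"
    if xy: "x \<in> D" "y \<in> D" "x \<le> y" "\<not> (x < 1/3 \<and> 1/3 < y)" "\<not> (x < 2/3 \<and> 2/3 < y)" for x y
  proof -
    have "0 \<le> x" "y \<le> 1" using xy D by auto
    then obtain i where "i \<in> {0, 1, 2}"
      and "x \<in> {real i / 3..(real i + 1) / 3}" "y \<in> {real i / 3..(real i + 1) / 3}"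
      using xy(3-5) by (elim common_third)
    from cell[OF this(1) xy(1,2) this(2,3)] xy(3) show ?thesis by simp
  qed
  have ordered: "d (f a) (f b) \<le> b - a" if a: "a \<in> D" and b: "b \<in> D" and "a \<le> b" for a b
  proof -
    define m1 m2 where "m1 = max a (min b (1/3))" and "m2 = max a (min b (2/3))"
    have m1: "m1 \<in> D" and m2: "m2 \<in> D"
      using a b D unfolding m1_def m2_def by (auto simp: max_def min_def)
    have "d (f a) (f b) \<le> d (f a) (f m1) + d (f m1) (f m2) + d (f m2) (f b)"
      using metric_on_triangle[OF met X[OF a] X[OF m1] X[OF b]]
        metric_on_triangle[OF met X[OF m1] X[OF m2] X[OF b]] by linarith
    also have "\<dots> \<le> (m1 - a) + (m2 - m1) + (b - m2)"
      using a b m1 m2 \<open>a \<le> b\<close>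
      by (intro add_mono step) (auto simp: m1_def m2_def max_def min_def)
    finally show ?thesis by simp
  qed
  show ?thesis
  proof (cases "a \<le> b")
    case True then show ?thesis using ordered[OF ab] by simp
  next
    case False then show ?thesis
      using ordered[OF ab(2,1)] metric_on_commute[OF met X[OF ab(1)] X[OF ab(2)]] by simp
  qed
qed

text \<open>\<open>orient True\<close> exchanges the two coordinates; it lets a single statement cover
  both the horizontal and the vertical version of a fact about the square.\<close>

definition orient :: "bool \<Rightarrow> 'x \<times> 'x \<Rightarrow> 'x \<times> 'x" where
  "orient b p = (if b then prod.swap p else p)"

lemma orient_simps [simp]: "orient False p = p" "orient True p = prod.swap p"
  unfolding orient_def by simp_all

lemma orient_orient [simp]: "orient b (orient b p) = p"
  by (cases b) simp_all

lemma orient_Not: "orient (\<not> b) (x, y) = orient b (y, x)"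
  by (cases b) simp_all

lemma taxicab_orient [simp]: "taxicab (orient b p) (orient b q) = taxicab p q"
  by (cases b) (auto simp: taxicab_def prod.swap_def)

lemma M0_orient [simp]: "orient b p \<in> M0 \<longleftrightarrow> p \<in> M0"
  by (cases b; cases p) (auto simp: M0_def)

lemma M0_iff_orient: "p \<in> M0 \<longleftrightarrow> (\<exists>b i r. i \<in> {0, 1} \<and> r \<in> {0..1} \<and> p = orient b (i, r))"
proof
  obtain x y where p: "p = (x, y)" by (cases p)
  assume "p \<in> M0"
  then have "(x, y) \<in> M0" using p by simp
  then have "x \<in> {0, 1} \<and> y \<in> {0..1} \<or> y \<in> {0, 1} \<and> x \<in> {0..1}"
    unfolding M0_def by simp
  then show "\<exists>b i r. i \<in> {0, 1} \<and> r \<in> {0..1} \<and> p = orient b (i, r)"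
  proof
    assume "x \<in> {0, 1} \<and> y \<in> {0..1}"
    then show ?thesis using p by (intro exI[of _ False] exI[of _ x] exI[of _ y]) simp
  next
    assume "y \<in> {0, 1} \<and> x \<in> {0..1}"
    then show ?thesis using p by (intro exI[of _ True] exI[of _ y] exI[of _ x]) simp
  qed
next
  assume "\<exists>b i r. i \<in> {0, 1} \<and> r \<in> {0..1} \<and> p = orient b (i, r)"
  then obtain b i r where ir: "i \<in> {0, 1}" "r \<in> {0..1}" and p: "p = orient b (i, r)" by blast
  from ir have "(i, r) \<in> M0" unfolding M0_def by auto
  then show "p \<in> M0" unfolding p by simp
qed

lemma orient_in_Nset [simp]: "orient b n \<in> Nset \<longleftrightarrow> n \<in> Nset"
  by (cases b; cases n) (auto simp: Nset_def)

section \<open>Cells and the grid of thirds\<close>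

definition cell_point :: "nat \<times> nat \<Rightarrow> real \<times> real \<Rightarrow> real \<times> real" where
  "cell_point n p = ((real (fst n) + fst p) / 3, (real (snd n) + snd p) / 3)"

definition cell_coord :: "nat \<times> nat \<Rightarrow> real \<times> real \<Rightarrow> real \<times> real" where
  "cell_coord n P = (3 * fst P - real (fst n), 3 * snd P - real (snd n))"

definition in_cell :: "nat \<times> nat \<Rightarrow> real \<times> real \<Rightarrow> bool" where
  "in_cell n P \<longleftrightarrow> n \<in> Nset \<and> cell_coord n P \<in> U0"

lemma cell_coord_cell_point [simp]: "cell_coord n (cell_point n p) = p"
  unfolding cell_coord_def cell_point_def by (simp add: prod_eq_iff field_simps)

lemma cell_point_cell_coord [simp]: "cell_point n (cell_coord n P) = P"
  unfolding cell_coord_def cell_point_def by (simp add: prod_eq_iff field_simps)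

lemma cell_point_eq_iff:
  "cell_point m p = cell_point n q \<longleftrightarrow>
     real (fst m) + fst p = real (fst n) + fst q \<and> real (snd m) + snd p = real (snd n) + snd q"
  unfolding cell_point_def by (auto simp: prod_eq_iff)

lemma cell_point_orient: "cell_point (orient b n) (orient b p) = orient b (cell_point n p)"
  by (cases b) (simp_all add: cell_point_def prod.swap_def)

lemma cell_coord_orient: "cell_coord (orient b n) (orient b P) = orient b (cell_coord n P)"
  by (cases b) (simp_all add: cell_coord_def prod.swap_def)

lemma taxicab_cell_coord: "taxicab (cell_coord n P) (cell_coord n Q) = 3 * taxicab P Q"
proof -
  have "\<bar>3 * x - c - (3 * y - c)\<bar> = 3 * \<bar>x - y\<bar>" for x y c :: real
    by (simp add: abs_if)
  then show ?thesis unfolding taxicab_def cell_coord_def by simp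
qed

lemma taxicab_cell_point: "taxicab (cell_point n p) (cell_point n q) = taxicab p q / 3"
  using taxicab_cell_coord[of n "cell_point n p" "cell_point n q"] by simp

lemma third_exists:
  fixes r :: real assumes "0 \<le> r" "r \<le> 1"
  shows "\<exists>k::nat. k \<in> {0, 1, 2} \<and> real k / 3 \<le> r \<and> r \<le> (real k + 1) / 3"
proof -
  consider "r \<le> 1/3" | "1/3 \<le> r \<and> r \<le> 2/3" | "2/3 \<le> r" by linarith
  then show ?thesis
    by cases (use assms in \<open>auto intro: exI[of _ 0] exI[of _ 1] exI[of _ 2]\<close>)
qed

lemma in_cell_iff:
  "in_cell n P \<longleftrightarrow> n \<in> Nset \<and>
     real (fst n) / 3 \<le> fst P \<and> fst P \<le> (real (fst n) + 1) / 3 \<and>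
     real (snd n) / 3 \<le> snd P \<and> snd P \<le> (real (snd n) + 1) / 3"
  unfolding in_cell_def cell_coord_def U0_def by auto

lemma in_cell_U0: "in_cell n P \<Longrightarrow> P \<in> U0"
  unfolding in_cell_iff Nset_def U0_def by (cases P) auto

lemma in_cell_exists: "P \<in> U0 \<Longrightarrow> \<exists>n. in_cell n P"
proof -
  assume "P \<in> U0"
  then have "0 \<le> fst P" "fst P \<le> 1" "0 \<le> snd P" "snd P \<le> 1"
    unfolding U0_def by auto
  then obtain k l :: nat where k: "k \<in> {0, 1, 2}" "real k / 3 \<le> fst P" "fst P \<le> (real k + 1) / 3"
    and l: "l \<in> {0, 1, 2}" "real l / 3 \<le> snd P" "snd P \<le> (real l + 1) / 3"
    using third_exists by meson
  have "(k, l) \<in> Nset" using k(1) l(1) unfolding Nset_def by blast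
  with k l have "in_cell (k, l) P" unfolding in_cell_iff by simp
  then show ?thesis by blast
qed

lemma in_cell_cell_point: "n \<in> Nset \<Longrightarrow> p \<in> U0 \<Longrightarrow> in_cell n (cell_point n p)"
  unfolding in_cell_def by simp

lemma in_cell_orient: "in_cell (orient b n) (orient b P) \<longleftrightarrow> in_cell n P"
  by (cases b; cases n; cases P) (auto simp: in_cell_iff Nset_def)

lemma cell_coord_in_M0_if_two_cells:
  assumes "in_cell m P" "in_cell n P" "m \<noteq> n"
  shows "cell_coord m P \<in> M0"
proof -
  obtain a b a' b' where mn: "m = (a, b)" "n = (a', b')" by (cases m, cases n)
  have c: "real a \<le> 3 * fst P" "3 * fst P \<le> real a + 1"
      "real b \<le> 3 * snd P" "3 * snd P \<le> real b + 1"
      "real a' \<le> 3 * fst P" "3 * fst P \<le> real a' + 1"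
      "real b' \<le> 3 * snd P" "3 * snd P \<le> real b' + 1"
    using assms(1,2) unfolding in_cell_iff mn by auto
  have "a \<noteq> a' \<or> b \<noteq> b'" using assms(3) mn by auto
  then have "3 * fst P - real a \<in> {0, 1} \<or> 3 * snd P - real b \<in> {0, 1}"
  proof
    assume "a \<noteq> a'"
    then have "real a' \<ge> real a + 1 \<or> real a \<ge> real a' + 1" by linarith
    then show ?thesis using c by auto
  next
    assume "b \<noteq> b'"
    then have "real b' \<ge> real b + 1 \<or> real b \<ge> real b' + 1" by linarith
    then show ?thesis using c by auto
  qed
  with assms(1) show ?thesis unfolding in_cell_def M0_def U0_def cell_coord_def mn by auto
qed

lemma exists_boundary_point_between:
  assumes X: "in_cell m X" and Y: "in_cell n Y" and "m \<noteq> n"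
  shows "\<exists>P. in_cell m P \<and> cell_coord m P \<in> M0 \<and> taxicab X P + taxicab P Y = taxicab X Y"
proof -
  obtain a b where m: "m = (a, b)" by (cases m)
  define P where "P = (max (real a / 3) (min ((real a + 1) / 3) (fst Y)),
                       max (real b / 3) (min ((real b + 1) / 3) (snd Y)))"
  have mN: "m \<in> Nset" using X unfolding in_cell_def by blast
  have P: "in_cell m P" using mN unfolding in_cell_iff P_def m by (auto simp: max_def min_def)
  have "cell_coord m P \<in> M0"
  proof (cases "in_cell m Y")
    case True
    then have "P = Y" unfolding P_def m in_cell_iff by (simp add: prod_eq_iff)
    then show ?thesis using cell_coord_in_M0_if_two_cells[OF True Y \<open>m \<noteq> n\<close>] by simp
  next
    case False
    then have "fst Y \<notin> {real a / 3..(real a + 1) / 3} \<or> snd Y \<notin> {real b / 3..(real b + 1) / 3}"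
      using mN unfolding in_cell_iff m by auto
    then have "fst P \<in> {real a / 3, (real a + 1) / 3} \<or> snd P \<in> {real b / 3, (real b + 1) / 3}"
      unfolding P_def by auto
    with P show ?thesis unfolding in_cell_def M0_def U0_def cell_coord_def m by auto
  qed
  moreover have "taxicab X P + taxicab P Y = taxicab X Y"
  proof -
    have between: "\<bar>x - max lo (min hi y)\<bar> + \<bar>max lo (min hi y) - y\<bar> = \<bar>x - y\<bar>"
      if "lo \<le> x" "x \<le> hi" for lo hi x y :: real
      using that by (auto simp: max_def min_def abs_if)
    show ?thesis
      using X between[of "real a / 3" "fst X" "(real a + 1) / 3" "fst Y"]
        between[of "real b / 3" "snd X" "(real b + 1) / 3" "snd Y"]
      unfolding taxicab_def P_def m in_cell_iff by simp
  qed
  ultimately show ?thesis using P by blast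
qed

definition thirds :: "real set" where
  "thirds = {0, 1/3, 2/3, 1}"

definition on_grid :: "real \<times> real \<Rightarrow> bool" where
  "on_grid P \<longleftrightarrow> P \<in> U0 \<and> (fst P \<in> thirds \<or> snd P \<in> thirds)"

lemma on_grid_iff_cell_coord:
  assumes "in_cell n P" shows "on_grid P \<longleftrightarrow> cell_coord n P \<in> M0"
proof -
  obtain a b where n: "n = (a, b)" by (cases n)
  have ab: "a \<in> {0, 1, 2}" "b \<in> {0, 1, 2}" using assms unfolding in_cell_def n Nset_def by auto
  have "fst P \<in> thirds \<longleftrightarrow> 3 * fst P - real a \<in> {0, 1}"
    and "snd P \<in> thirds \<longleftrightarrow> 3 * snd P - real b \<in> {0, 1}"
    using assms ab unfolding in_cell_iff n thirds_def by auto
  then show ?thesis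
    using assms in_cell_U0[OF assms]
      unfolding on_grid_def in_cell_def M0_def U0_def cell_coord_def n
    by auto
qed

lemma on_grid_if_M0:
  assumes "p \<in> M0" shows "on_grid p"
proof -
  have "fst p \<in> {0, 1} \<or> snd p \<in> {0, 1}" using assms unfolding M0_def by auto
  then show ?thesis using M0_subset_U0 assms unfolding on_grid_def thirds_def by auto
qed

lemma on_grid_orient: "on_grid (orient b P) \<longleftrightarrow> on_grid P"
  by (cases b; cases P) (auto simp: on_grid_def U0_def)

lemma on_grid_iff_orient:
  "on_grid P \<longleftrightarrow> (\<exists>b x y. x \<in> {0..1} \<and> y \<in> thirds \<and> P = orient b (x, y))"
proof
  assume "on_grid P"
  then have "fst P \<in> {0..1}" "snd P \<in> {0..1}" "fst P \<in> thirds \<or> snd P \<in> thirds"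
    unfolding on_grid_def U0_def by (auto simp: mem_Times_iff)
  then show "\<exists>b x y. x \<in> {0..1} \<and> y \<in> thirds \<and> P = orient b (x, y)"
    by (cases P) (auto intro: exI[of _ True] exI[of _ False])
next
  assume "\<exists>b x y. x \<in> {0..1} \<and> y \<in> thirds \<and> P = orient b (x, y)"
  then obtain b x y where xy: "x \<in> {0..1}" "y \<in> thirds" and P: "P = orient b (x, y)" by blast
  have "on_grid (x, y)" using xy unfolding on_grid_def U0_def thirds_def by auto
  then show "on_grid P" unfolding P on_grid_orient .
qed

section \<open>The gluing relation and the quotient metric\<close>

definition tens_elem :: "(real \<times> real \<Rightarrow> 'a) \<Rightarrow> nat \<times> nat \<Rightarrow> 'a \<Rightarrow> ((nat \<times> nat) \<times> 'a) set" where
  "tens_elem S n x = tens_eq S `` {(n, x)}"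

lemma equiv_tens_eq: "equiv UNIV (tens_eq S)"
  unfolding tens_eq_def equiv_def
  by (auto simp: refl_on_def sym_rtrancl sym_Un_converse trans_rtrancl)

lemma tens_eq_closed:
  assumes "S ` M0 \<subseteq> X" "(x, z) \<in> tens_eq S" "x \<in> Nset \<times> X"
  shows "z \<in> Nset \<times> X"
  using assms(2,3) unfolding tens_eq_def
proof (induction rule: rtrancl_induct)
  case (step y z)
  then show ?case using assms(1) unfolding gen_rel_def by blast
qed simp

lemma tens_car_subset: "S ` M0 \<subseteq> X \<Longrightarrow> A \<in> tens_car X S \<Longrightarrow> A \<subseteq> Nset \<times> X"
  using tens_eq_closed unfolding tens_car_def quotient_def by blast

lemma tens_car_class_eq:
  assumes "A \<in> tens_car X S" "a \<in> A" shows "A = tens_eq S `` {a}"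
proof -
  from assms(1) obtain x where x: "A = tens_eq S `` {x}" unfolding tens_car_def
    by (auto elim: quotientE)
  with assms(2) have "(x, a) \<in> tens_eq S" by simp
  with x show ?thesis using equiv_class_eq[OF equiv_tens_eq] by simp
qed

lemma some_in_tens_car: "A \<in> tens_car X S \<Longrightarrow> (SOME a. a \<in> A) \<in> A"
  unfolding tens_car_def quotient_def tens_eq_def by (auto intro: someI)

lemma tens_eq_if_same_class: "A \<in> tens_car X S \<Longrightarrow> a \<in> A \<Longrightarrow> b \<in> A \<Longrightarrow> (a, b) \<in> tens_eq S"
  using tens_car_class_eq by fastforce

lemma tens_car_elemE:
  assumes "A \<in> tens_car X S"
  obtains n x where "n \<in> Nset" "x \<in> X" "A = tens_elem S n x"
  using assms unfolding tens_car_def tens_elem_def by (auto elim!: quotientE)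

lemma tens_elem_in_tens_car: "n \<in> Nset \<Longrightarrow> x \<in> X \<Longrightarrow> tens_elem S n x \<in> tens_car X S"
  unfolding tens_elem_def tens_car_def by (rule quotientI) simp

lemma mem_tens_elem: "(n, x) \<in> tens_elem S n x"
  unfolding tens_elem_def tens_eq_def by simp

lemma tens_map_id:
  assumes "A \<in> tens_car X S" shows "tens_map S (\<lambda>x. x) A = A"
proof -
  have "tens_map S (\<lambda>x. x) A = tens_eq S `` {SOME z. z \<in> A}"
    unfolding tens_map_def by simp
  also have "\<dots> = A"
    using tens_car_class_eq[OF assms some_in_tens_car[OF assms]] by simp
  finally show ?thesis .
qed

text \<open>Cells meeting only at a corner are glued through a third cell adjacent to both.\<close>

lemma tens_eq_adjacent:
  assumes "m \<in> Nset" "m' \<in> Nset" "adjN m m'" "v \<in> M0" "v' \<in> M0"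
    and "cell_point m v = cell_point m' v'"
  shows "((m, S v), (m', S v')) \<in> tens_eq S"
proof -
  have "((m, S v), (m', S v')) \<in> gen_rel S"
    using assms unfolding gen_rel_def cell_point_eq_iff by blast
  then show ?thesis unfolding tens_eq_def by blast
qed

lemma tens_eq_glue:
  assumes n: "n \<in> Nset" "n' \<in> Nset" and u: "u \<in> M0" "u' \<in> M0"
    and eq: "cell_point n u = cell_point n' u'"
  shows "((n, S u), (n', S u')) \<in> tens_eq S"
proof -
  obtain a b a' b' where nn: "n = (a, b)" "n' = (a', b')" by (cases n, cases n')
  have e1: "real a + fst u = real a' + fst u'" and e2: "real b + snd u = real b' + snd u'"
    using eq unfolding cell_point_eq_iff nn by auto
  have uU: "0 \<le> fst u" "fst u \<le> 1" "0 \<le> snd u" "snd u \<le> 1"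
     "0 \<le> fst u'" "fst u' \<le> 1" "0 \<le> snd u'" "snd u' \<le> 1"
    using u unfolding M0_def by auto
  have a: "a = a' \<or> (a' = a + 1 \<or> a = a' + 1) \<and> fst u' \<in> {0, 1}"
    using e1 uU by (cases "a = a'") (auto simp: of_nat_eq_iff[symmetric])
  have b: "b = b' \<or> (b' = b + 1 \<or> b = b' + 1) \<and> snd u \<in> {0, 1}"
    using e2 uU by (cases "b = b'") (auto simp: of_nat_eq_iff[symmetric])
  show ?thesis
  proof (cases "a = a' \<or> b = b'")
    case True
    show ?thesis
    proof (cases "n = n'")
      case True
      then have "u = u'" using eq by (metis cell_coord_cell_point)
      then show ?thesis using True unfolding tens_eq_def by simp
    next
      case False
      with \<open>a = a' \<or> b = b'\<close> a b have "adjN n n'" unfolding nn adjN_def by auto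
      then show ?thesis using tens_eq_adjacent n u eq by blast
    qed
  next
    case False
    define m v where "m = (a', b)" and "v = (fst u', snd u)"
    have mN: "m \<in> Nset" using n unfolding m_def nn Nset_def by auto
    have vM: "v \<in> M0" using False a b uU unfolding v_def M0_def by auto
    have "((n, S u), (m, S v)) \<in> tens_eq S"
      using False a b e1 by (intro tens_eq_adjacent n(1) mN u(1) vM)
        (auto simp: m_def v_def nn adjN_def cell_point_eq_iff)
    moreover have "((m, S v), (n', S u')) \<in> tens_eq S"
      using False a b e2 by (intro tens_eq_adjacent mN n(2) vM u(2))
        (auto simp: m_def v_def nn adjN_def cell_point_eq_iff)
    ultimately show ?thesis unfolding tens_eq_def by (meson rtrancl_trans)
  qed
qed

lemma tens_S_cell:
  assumes "in_cell n P" "cell_coord n P \<in> M0"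
  shows "tens_S S P = tens_elem S n (S (cell_coord n P))"
proof -
  define n0 where "n0 = (SOME n. in_cell n P)"
  have n0: "in_cell n0 P" unfolding n0_def using assms(1) by (rule someI)
  have M0: "cell_coord n0 P \<in> M0"
    using assms(2) cell_coord_in_M0_if_two_cells[OF n0 assms(1)] by (cases "n0 = n") auto
  have "((n0, S (cell_coord n0 P)), (n, S (cell_coord n P))) \<in> tens_eq S"
    using n0 assms M0 by (intro tens_eq_glue) (auto simp: in_cell_def)
  then have "tens_elem S n0 (S (cell_coord n0 P)) = tens_elem S n (S (cell_coord n P))"
    unfolding tens_elem_def using equiv_class_eq[OF equiv_tens_eq] by blast
  moreover have "tens_S S P = tens_elem S n0 (S (cell_coord n0 P))"
    unfolding tens_S_def tens_elem_def n0_def in_cell_iff cell_coord_def Let_def by simp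
  ultimately show ?thesis by simp
qed

lemma tens_S_M0:
  assumes "p \<in> M0"
  obtains n
  where "in_cell n p" "cell_coord n p \<in> M0" "tens_S S p = tens_elem S n (S (cell_coord n p))"
proof -
  obtain n where n: "in_cell n p" using in_cell_exists M0_subset_U0 assms by blast
  moreover have "cell_coord n p \<in> M0"
    using on_grid_iff_cell_coord[OF n] on_grid_if_M0[OF assms] by simp
  ultimately show ?thesis using that tens_S_cell by blast
qed

lemma tens_S_in_tens_car: "S ` M0 \<subseteq> X \<Longrightarrow> p \<in> M0 \<Longrightarrow> tens_S S p \<in> tens_car X S"
  by (erule tens_S_M0[of p S]) (auto intro!: tens_elem_in_tens_car simp: in_cell_def)

definition tens_pos :: "('b \<Rightarrow> real \<times> real) \<Rightarrow> (nat \<times> nat) \<times> 'b \<Rightarrow> real \<times> real" where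
  "tens_pos h z = cell_point (fst z) (h (snd z))"

lemma tens_pos_eq_if_tens_eq:
  assumes "\<And>p. p \<in> M0 \<Longrightarrow> h (S p) = p" "(z, z') \<in> tens_eq S"
  shows "tens_pos h z = tens_pos h z'"
  using assms(2) unfolding tens_eq_def
proof (induction rule: rtrancl_induct)
  case (step y z)
  then show ?case using assms(1) unfolding gen_rel_def tens_pos_def cell_point_eq_iff by auto
qed simp

lemma tens_pos_in_U0: "z \<in> Nset \<times> X \<Longrightarrow> (\<And>x. x \<in> X \<Longrightarrow> h x \<in> U0) \<Longrightarrow> tens_pos h z \<in> U0"
  unfolding tens_pos_def by (auto intro!: in_cell_U0[OF in_cell_cell_point])

definition chain_costs :: "'a set \<Rightarrow> ('a \<Rightarrow> 'a \<Rightarrow> real) \<Rightarrow> (real \<times> real \<Rightarrow> 'a) \<Rightarrow>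
    ((nat \<times> nat) \<times> 'a) set \<Rightarrow> ((nat \<times> nat) \<times> 'a) set \<Rightarrow> real set" where
  "chain_costs X d S A B = {(\<Sum>i<n. base_dist d (p i) (q i)) | n p q.
       0 < n \<and> (\<forall>i<n. p i \<in> Nset \<times> X \<and> q i \<in> Nset \<times> X) \<and>
       p 0 \<in> A \<and> q (n - 1) \<in> B \<and>
       (\<forall>i. Suc i < n \<longrightarrow> (q i, p (Suc i)) \<in> tens_eq S)}"

lemma tens_dist_eq_Inf: "tens_dist X d S A B = Inf (chain_costs X d S A B)"
  unfolding tens_dist_def chain_costs_def ..

lemma bdd_below_chain_costs:
  assumes "\<And>x y. x \<in> X \<Longrightarrow> y \<in> X \<Longrightarrow> 0 \<le> d x y"
  shows "bdd_below (chain_costs X d S A B)"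
proof (rule bdd_belowI)
  fix t assume "t \<in> chain_costs X d S A B"
  then obtain n p q where "t = (\<Sum>i<(n::nat). base_dist d (p i) (q i))"
    "\<forall>i<n. p i \<in> Nset \<times> X \<and> q i \<in> Nset \<times> X" unfolding chain_costs_def by blast
  then show "0 \<le> t" using assms unfolding base_dist_def
    by (auto intro!: sum_nonneg simp: mem_Times_iff)
qed

lemma tens_dist_le_chain:
  assumes "\<And>x y. x \<in> X \<Longrightarrow> y \<in> X \<Longrightarrow> 0 \<le> d x y" and "0 < n"
    and "\<forall>i<n. p i \<in> Nset \<times> X \<and> q i \<in> Nset \<times> X" and "p 0 \<in> A" and "q (n - 1) \<in> B"
    and "\<forall>i. Suc i < n \<longrightarrow> (q i, p (Suc i)) \<in> tens_eq S"
  shows "tens_dist X d S A B \<le> (\<Sum>i<n. base_dist d (p i) (q i))"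
  unfolding tens_dist_eq_Inf
proof (rule cInf_lower)
  show "(\<Sum>i<n. base_dist d (p i) (q i)) \<in> chain_costs X d S A B"
    using assms(2-) unfolding chain_costs_def by blast
qed (rule bdd_below_chain_costs[OF assms(1)])

lemma single_chain_cost:
  assumes "a \<in> A" "b \<in> B" "a \<in> Nset \<times> X" "b \<in> Nset \<times> X"
  shows "base_dist d a b \<in> chain_costs X d S A B"
  unfolding chain_costs_def mem_Collect_eq
  by (rule exI[of _ 1], rule exI[of _ "\<lambda>_. a"], rule exI[of _ "\<lambda>_. b"]) (simp add: assms)

lemma tens_dist_le_base_dist:
  assumes "\<And>x y. x \<in> X \<Longrightarrow> y \<in> X \<Longrightarrow> 0 \<le> d x y"
    and "a \<in> A" "b \<in> B" "a \<in> Nset \<times> X" "b \<in> Nset \<times> X"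
  shows "tens_dist X d S A B \<le> base_dist d a b"
  unfolding tens_dist_eq_Inf
  by (rule cInf_lower[OF single_chain_cost[OF assms(2-)] bdd_below_chain_costs[OF assms(1)]])

lemma chain_costs_nonempty:
  assumes "S ` M0 \<subseteq> X" "A \<in> tens_car X S" "B \<in> tens_car X S"
  shows "chain_costs X d S A B \<noteq> {}"
proof -
  let ?a = "SOME a. a \<in> A" and ?b = "SOME b. b \<in> B"
  have a: "?a \<in> A" and b: "?b \<in> B" using some_in_tens_car assms(2,3) by blast+
  have "?a \<in> Nset \<times> X" using tens_car_subset[OF assms(1,2)] a by (rule subsetD)
  moreover have "?b \<in> Nset \<times> X" using tens_car_subset[OF assms(1,3)] b by (rule subsetD)
  ultimately have "base_dist d ?a ?b \<in> chain_costs X d S A B" by (rule single_chain_cost[OF a b])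
  then show ?thesis by blast
qed

lemma chain_costs_mono:
  assumes "X' \<subseteq> X" shows "chain_costs X' d S A B \<subseteq> chain_costs X d S A B"
proof
  fix t assume "t \<in> chain_costs X' d S A B"
  then obtain n p q where t: "t = (\<Sum>i<n. base_dist d (p i) (q i))" "0 < n"
    "\<forall>i<n. p i \<in> Nset \<times> X' \<and> q i \<in> Nset \<times> X'" "p 0 \<in> A" "q (n - 1) \<in> B"
    "\<forall>i. Suc i < n \<longrightarrow> (q i, p (Suc i)) \<in> tens_eq S" unfolding chain_costs_def by blast
  moreover have "\<forall>i<n. p i \<in> Nset \<times> X \<and> q i \<in> Nset \<times> X"
    using t(3) assms by (auto simp: mem_Times_iff)
  ultimately show "t \<in> chain_costs X d S A B" unfolding chain_costs_def by blast
qed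

lemma tens_dist_subset:
  assumes "X' \<subseteq> X" "\<And>x y. x \<in> X \<Longrightarrow> y \<in> X \<Longrightarrow> 0 \<le> d x y" "S ` M0 \<subseteq> X'"
    and "A \<in> tens_car X' S" "B \<in> tens_car X' S"
  shows "tens_dist X d S A B \<le> tens_dist X' d S A B"
  unfolding tens_dist_eq_Inf
  by (rule cInf_superset_mono[OF chain_costs_nonempty[OF assms(3-5)]
        bdd_below_chain_costs[OF assms(2)] chain_costs_mono[OF assms(1)]])

lemma taxicab_tens_pos_le_chain:
  assumes h: "\<And>p. p \<in> M0 \<Longrightarrow> h (S p) = p" "\<And>x. x \<in> X \<Longrightarrow> h x \<in> U0"
    "\<And>x y. x \<in> X \<Longrightarrow> y \<in> X \<Longrightarrow> taxicab (h x) (h y) \<le> d x y"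
    and pq: "\<forall>i<n. p i \<in> Nset \<times> X \<and> q i \<in> Nset \<times> X"
    and chain: "\<forall>i. Suc i < n \<longrightarrow> (q i, p (Suc i)) \<in> tens_eq S"
    and "k < n"
  shows "taxicab (tens_pos h (p 0)) (tens_pos h (q k)) \<le> (\<Sum>i<Suc k. base_dist d (p i) (q i))"
proof -
  have link: "taxicab (tens_pos h (p i)) (tens_pos h (q i)) \<le> base_dist d (p i) (q i)"
    if "i < n" for i
  proof (cases "fst (p i) = fst (q i)")
    case True
    then show ?thesis
      using pq h(3) that unfolding base_dist_def tens_pos_def
      by (auto simp: taxicab_cell_point mem_Times_iff divide_right_mono)
  next
    case False
    then show ?thesis unfolding base_dist_def
      using pq that by (auto intro!: taxicab_le_2 tens_pos_in_U0 h(2))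
  qed
  from \<open>k < n\<close> show ?thesis
  proof (induction k)
    case 0
    then show ?case using link by simp
  next
    case (Suc k)
    have "tens_pos h (q k) = tens_pos h (p (Suc k))"
      using tens_pos_eq_if_tens_eq[of h S, OF h(1)] chain Suc.prems by blast
    then have "taxicab (tens_pos h (p 0)) (tens_pos h (q (Suc k)))
        \<le> taxicab (tens_pos h (p 0)) (tens_pos h (q k))
          + taxicab (tens_pos h (p (Suc k))) (tens_pos h (q (Suc k)))"
      using taxicab_triangle by metis
    then show ?case using Suc.IH Suc.prems link[of "Suc k"] by simp
  qed
qed

lemma taxicab_tens_pos_le_tens_dist:
  assumes h: "\<And>p. p \<in> M0 \<Longrightarrow> h (S p) = p" "\<And>x. x \<in> X \<Longrightarrow> h x \<in> U0"
    "\<And>x y. x \<in> X \<Longrightarrow> y \<in> X \<Longrightarrow> taxicab (h x) (h y) \<le> d x y"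
    and SX: "S ` M0 \<subseteq> X" and AB: "A \<in> tens_car X S" "B \<in> tens_car X S" "a \<in> A" "b \<in> B"
  shows "taxicab (tens_pos h a) (tens_pos h b) \<le> tens_dist X d S A B"
  unfolding tens_dist_eq_Inf
proof (rule cInf_greatest)
  show "chain_costs X d S A B \<noteq> {}" using chain_costs_nonempty SX AB(1,2) .
next
  fix t assume "t \<in> chain_costs X d S A B"
  then obtain n p q where t: "t = (\<Sum>i<n. base_dist d (p i) (q i))" "0 < n"
    "\<forall>i<n. p i \<in> Nset \<times> X \<and> q i \<in> Nset \<times> X" "p 0 \<in> A" "q (n - 1) \<in> B"
    "\<forall>i. Suc i < n \<longrightarrow> (q i, p (Suc i)) \<in> tens_eq S" unfolding chain_costs_def by blast
  have "tens_pos h a = tens_pos h (p 0)" "tens_pos h b = tens_pos h (q (n - 1))"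
    using tens_pos_eq_if_tens_eq[of h S, OF h(1)] tens_eq_if_same_class AB t(4,5) by blast+
  then show "taxicab (tens_pos h a) (tens_pos h b) \<le> t"
    using taxicab_tens_pos_le_chain[OF h t(3,6), of "n - 1"] t(1,2) by simp
qed

section \<open>Consequences of initiality\<close>

lemma ex_inj_on_U0:
  fixes S :: "real \<times> real \<Rightarrow> 'a"
  assumes "inj_on S M0"
  shows "\<exists>j :: real \<times> real \<Rightarrow> 'a. inj_on j U0"
proof -
  have "U0 \<lesssim> (UNIV :: real set) \<times> (UNIV :: real set)"
    by (rule subset_imp_lepoll) simp
  also have "(UNIV :: real set) \<times> (UNIV :: real set) \<approx> (UNIV :: real set)"
    using card_of_Times_same_infinite[OF infinite_UNIV_char_0] eqpoll_iff_card_of_ordIso by blast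
  also have "(UNIV :: real set) \<approx> {0..1::real}"
    using closed_interval_eqpoll_reals[of 0 1] eqpoll_sym by auto
  also have "{0..1::real} \<lesssim> M0"
    unfolding lepoll_def by (rule exI[of _ "\<lambda>r. (r, 0)"]) (auto simp: inj_on_def M0_def)
  also have "M0 \<lesssim> (UNIV :: 'a set)"
    unfolding lepoll_def using assms by blast
  finally show ?thesis unfolding lepoll_def by blast
qed

lemma square_ms_U0_copy:
  fixes j :: "real \<times> real \<Rightarrow> 'a" and j' :: "'a \<Rightarrow> real \<times> real"
  assumes inj: "inj_on j U0" and inv: "\<And>q. q \<in> U0 \<Longrightarrow> j' (j q) = q"
  shows "square_ms (j ` U0) (\<lambda>x y. taxicab (j' x) (j' y)) j"
proof -
  let ?Y = "j ` U0" and ?e = "\<lambda>x y. taxicab (j' x) (j' y)"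
  have j'_U0: "\<And>x. x \<in> ?Y \<Longrightarrow> j' x \<in> U0" and j'_M0: "\<And>p. p \<in> M0 \<Longrightarrow> j' (j p) = p"
    using inv M0_subset_U0 by auto
  have jM0: "j ` M0 \<subseteq> ?Y" using M0_subset_U0 by auto
  have "metric_on ?Y ?e"
    unfolding metric_on_def
    using inj inv taxicab_eq_0_iff
    by (auto simp: taxicab_nonneg taxicab_commute taxicab_triangle inj_on_def)
  moreover have "\<forall>i\<in>{0, 1}. \<forall>r\<in>{0..1}. \<forall>s\<in>{0..1}.
        ?e (j (i, r)) (j (i, s)) = \<bar>s - r\<bar> \<and> ?e (j (r, i)) (j (s, i)) = \<bar>s - r\<bar>"
    using j'_M0 unfolding M0_def taxicab_def by auto
  moreover have "\<forall>p\<in>M0. \<forall>q\<in>M0. \<bar>fst p - fst q\<bar> + \<bar>snd p - snd q\<bar> \<le> ?e (j p) (j q)"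
    using j'_M0 unfolding taxicab_def by auto
  ultimately show ?thesis
    unfolding square_ms_def using inj jM0 j'_U0 taxicab_le_2 M0_subset_U0
    by (auto intro: inj_on_subset)
qed

lemma is_alg_U0_copy:
  fixes j :: "real \<times> real \<Rightarrow> 'a" and j' :: "'a \<Rightarrow> real \<times> real"
  assumes inj: "inj_on j U0" and inv: "\<And>q. q \<in> U0 \<Longrightarrow> j' (j q) = q"
  shows "is_alg (j ` U0) (\<lambda>x y. taxicab (j' x) (j' y)) j (\<lambda>B. j (tens_pos j' (SOME z. z \<in> B)))"
proof -
  let ?Y = "j ` U0" and ?e = "\<lambda>x y. taxicab (j' x) (j' y)"
    and ?mu = "\<lambda>B. j (tens_pos j' (SOME z. z \<in> B))"
  have j'_U0: "\<And>x. x \<in> ?Y \<Longrightarrow> j' x \<in> U0" and j'_M0: "\<And>p. p \<in> M0 \<Longrightarrow> j' (j p) = p"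
    using inv M0_subset_U0 by auto
  have jM0: "j ` M0 \<subseteq> ?Y" using M0_subset_U0 by auto
  have "sq_hom (tens_car ?Y j) (tens_dist ?Y ?e j) (tens_S j) ?Y ?e j ?mu"
    unfolding sq_hom_def
  proof (intro conjI ballI subsetI)
    have pos_U0: "tens_pos j' (SOME z. z \<in> A) \<in> U0" if "A \<in> tens_car ?Y j" for A
      using tens_car_subset[OF jM0 that] some_in_tens_car[OF that]
      by (auto intro: tens_pos_in_U0 j'_U0)
    show "y \<in> ?Y" if "y \<in> ?mu ` tens_car ?Y j" for y
      using that pos_U0 by auto
    fix A B assume AB: "A \<in> tens_car ?Y j" "B \<in> tens_car ?Y j"
    have "taxicab (tens_pos j' (SOME z. z \<in> A)) (tens_pos j' (SOME z. z \<in> B))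
        \<le> tens_dist ?Y ?e j A B"
      by (rule taxicab_tens_pos_le_tens_dist[OF j'_M0 j'_U0 _ jM0 AB
            some_in_tens_car some_in_tens_car])
        (use AB in simp_all)
    then show "?e (?mu A) (?mu B) \<le> tens_dist ?Y ?e j A B"
      using inv pos_U0 AB by simp
  next
    fix p assume p: "p \<in> M0"
    then obtain n where n: "in_cell n p" "cell_coord n p \<in> M0"
      and S: "tens_S j p = tens_elem j n (j (cell_coord n p))" by (rule tens_S_M0)
    have "(SOME z. z \<in> tens_S j p) \<in> tens_S j p"
      unfolding S using mem_tens_elem by (rule someI)
    then have "tens_pos j' (SOME z. z \<in> tens_S j p) = tens_pos j' (n, j (cell_coord n p))"
      unfolding S tens_elem_def using tens_pos_eq_if_tens_eq[of j' j, OF j'_M0]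
      by (metis Image_singleton_iff)
    also have "\<dots> = p" unfolding tens_pos_def using j'_M0[OF n(2)] by simp
    finally show "?mu (tens_S j p) = j p" by simp
  qed
  with square_ms_U0_copy[OF inj inv] show ?thesis unfolding is_alg_def by blast
qed

locale coord_alg =
  fixes W :: "'a set" and d :: "'a \<Rightarrow> 'a \<Rightarrow> real" and S :: "real \<times> real \<Rightarrow> 'a"
    and lam :: "((nat \<times> nat) \<times> 'a) set \<Rightarrow> 'a" and h :: "'a \<Rightarrow> real \<times> real"
  assumes alg: "is_alg W d S lam"
    and h_in_U0: "x \<in> W \<Longrightarrow> h x \<in> U0"
    and h_short: "x \<in> W \<Longrightarrow> y \<in> W \<Longrightarrow> taxicab (h x) (h y) \<le> d x y"
    and h_S: "p \<in> M0 \<Longrightarrow> h (S p) = p"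
    and h_lam: "A \<in> tens_car W S \<Longrightarrow> a \<in> A \<Longrightarrow> h (lam A) = tens_pos h a"

lemma coord_alg_U0_copy_hom:
  fixes j :: "real \<times> real \<Rightarrow> 'a" and j' :: "'a \<Rightarrow> real \<times> real"
  assumes alg: "is_alg W d S lam" and inv: "\<And>q. q \<in> U0 \<Longrightarrow> j' (j q) = q"
    and "alg_hom W d S lam (j ` U0) (\<lambda>x y. taxicab (j' x) (j' y)) j
      (\<lambda>B. j (tens_pos j' (SOME z. z \<in> B))) g"
  shows "coord_alg W d S lam (\<lambda>x. j' (g x))"
proof -
  have SW: "S ` M0 \<subseteq> W" using alg unfolding is_alg_def square_ms_def by blast
  have j'_M0: "\<And>p. p \<in> M0 \<Longrightarrow> j' (j p) = p" using inv M0_subset_U0 by blast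
  have gW: "g ` W \<subseteq> j ` U0"
    and g_short: "\<forall>x\<in>W. \<forall>y\<in>W. taxicab (j' (g x)) (j' (g y)) \<le> d x y"
    and gS: "\<forall>p\<in>M0. g (S p) = j p"
    and glam: "\<forall>A\<in>tens_car W S. g (lam A) = j (tens_pos j' (SOME z. z \<in> tens_map j g A))"
    using assms(3) unfolding alg_hom_def sq_hom_def by simp_all
  define h where "h x = j' (g x)" for x
  have h_S: "h (S p) = p" if "p \<in> M0" for p unfolding h_def using gS j'_M0 that by simp
  have h_in_U0: "h x \<in> U0" if x: "x \<in> W" for x
  proof -
    obtain q where "q \<in> U0" "g x = j q" using gW x by blast
    then show ?thesis unfolding h_def using inv by simp
  qed
  have h_short: "taxicab (h x) (h y) \<le> d x y" if "x \<in> W" "y \<in> W" for x y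
    unfolding h_def using g_short that by simp
  have h_lam: "h (lam A) = tens_pos h a" if A: "A \<in> tens_car W S" and a: "a \<in> A" for A a
  proof -
    let ?z0 = "SOME z. z \<in> A"
    let ?z1 = "SOME z. z \<in> tens_map j g A"
    have tm: "tens_map j g A = tens_eq j `` {(fst ?z0, g (snd ?z0))}"
      unfolding tens_map_def Let_def by simp
    have "(fst ?z0, g (snd ?z0)) \<in> tens_map j g A" unfolding tm by (simp add: tens_eq_def)
    then have "?z1 \<in> tens_map j g A" by (rule someI)
    then have z1: "((fst ?z0, g (snd ?z0)), ?z1) \<in> tens_eq j" unfolding tm by simp
    have "tens_pos h a = tens_pos h ?z0"
      using tens_pos_eq_if_tens_eq[of h S, OF h_S]
        tens_eq_if_same_class[OF A a some_in_tens_car[OF A]]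
      by blast
    also have "\<dots> = tens_pos j' (fst ?z0, g (snd ?z0))" unfolding tens_pos_def h_def by simp
    also have "\<dots> = tens_pos j' ?z1" using tens_pos_eq_if_tens_eq[of j' j, OF j'_M0] z1 by blast
    finally have "tens_pos j' ?z1 = tens_pos h a" ..
    moreover have "tens_pos h a \<in> U0"
      using tens_car_subset[OF SW A] a by (auto intro: tens_pos_in_U0 h_in_U0)
    ultimately show ?thesis unfolding h_def using glam A inv by simp
  qed
  show ?thesis
    using alg h_in_U0 h_short h_S h_lam unfolding h_def by (rule coord_alg.intro)
qed

text \<open>Initiality quantifies only over algebras carried by the type of \<open>W\<close>, so the square
  algebra is used through its copy in that type.\<close>

lemma initial_alg_coord_alg:
  assumes ini: "initial_alg W d S lam"
  shows "\<exists>h. coord_alg W d S lam h"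
proof -
  have alg: "is_alg W d S lam" using ini unfolding initial_alg_def by blast
  then have "inj_on S M0" unfolding is_alg_def square_ms_def by blast
  then obtain j :: "real \<times> real \<Rightarrow> 'a" where inj: "inj_on j U0" using ex_inj_on_U0 by blast
  define j' where "j' = the_inv_into U0 j"
  have inv: "\<And>q. q \<in> U0 \<Longrightarrow> j' (j q) = q" unfolding j'_def using the_inv_into_f_f[OF inj] by blast
  obtain g where "alg_hom W d S lam (j ` U0) (\<lambda>x y. taxicab (j' x) (j' y)) j
      (\<lambda>B. j (tens_pos j' (SOME z. z \<in> B))) g"
    using ini is_alg_U0_copy[OF inj inv] unfolding initial_alg_def by blast
  then show ?thesis using coord_alg_U0_copy_hom[where j = j and j' = j', OF alg inv] by blast
qed

lemma tens_car_mono: "X' \<subseteq> X \<Longrightarrow> tens_car X' S \<subseteq> tens_car X S"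
  unfolding tens_car_def quotient_def by blast

lemma is_alg_lam_image:
  assumes "is_alg W d S lam"
  shows "is_alg (lam ` tens_car W S) d S lam"
proof -
  let ?W' = "lam ` tens_car W S"
  have sq: "square_ms W d S" and hom: "sq_hom (tens_car W S) (tens_dist W d S) (tens_S S) W d S lam"
    using assms unfolding is_alg_def by blast+
  have W'W: "?W' \<subseteq> W" using hom unfolding sq_hom_def by blast
  have SW: "S ` M0 \<subseteq> W" and lamS: "\<And>p. p \<in> M0 \<Longrightarrow> lam (tens_S S p) = S p"
    using sq hom unfolding square_ms_def sq_hom_def by blast+
  have SW': "S ` M0 \<subseteq> ?W'"
    using tens_S_in_tens_car[OF SW] lamS by (metis image_eqI image_subsetI)
  have "square_ms ?W' d S"
    using sq W'W SW' metric_on_subset unfolding square_ms_def by (meson subset_iff)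
  moreover have "sq_hom (tens_car ?W' S) (tens_dist ?W' d S) (tens_S S) ?W' d S lam"
    unfolding sq_hom_def
  proof (intro conjI ballI)
    show "lam ` tens_car ?W' S \<subseteq> ?W'" using tens_car_mono[OF W'W] by blast
    show "\<And>p. p \<in> M0 \<Longrightarrow> lam (tens_S S p) = S p" by (rule lamS)
    fix A B assume AB: "A \<in> tens_car ?W' S" "B \<in> tens_car ?W' S"
    have "d (lam A) (lam B) \<le> tens_dist W d S A B"
      using hom AB tens_car_mono[OF W'W] unfolding sq_hom_def by blast
    also have "\<dots> \<le> tens_dist ?W' d S A B"
      using sq unfolding square_ms_def metric_on_def
      by (intro tens_dist_subset[OF W'W _ SW' AB]) blast
    finally show "d (lam A) (lam B) \<le> tens_dist ?W' d S A B" .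
  qed
  ultimately show ?thesis unfolding is_alg_def by blast
qed

lemma initial_alg_endo_id:
  assumes ini: "initial_alg W d S lam" and g: "alg_hom W d S lam W d S lam g" and "x \<in> W"
  shows "g x = x"
proof -
  have alg: "is_alg W d S lam" using ini unfolding initial_alg_def by blast
  then have "S ` M0 \<subseteq> W" unfolding is_alg_def square_ms_def by blast
  then have "alg_hom W d S lam W d S lam (\<lambda>x. x)"
    unfolding alg_hom_def sq_hom_def using tens_map_id[of _ W S] by auto
  moreover obtain h where "\<forall>h'. alg_hom W d S lam W d S lam h' \<longrightarrow> (\<forall>x\<in>W. h' x = h x)"
    using ini alg unfolding initial_alg_def by blast
  ultimately show ?thesis using g \<open>x \<in> W\<close> by metis
qed

text \<open>The surjective half of Lambek's lemma.\<close>

lemma initial_alg_lam_surj: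
  assumes ini: "initial_alg W d S lam" and x: "x \<in> W"
  shows "\<exists>n\<in>Nset. \<exists>x'\<in>W. x = lam (tens_elem S n x')"
proof -
  let ?W' = "lam ` tens_car W S"
  have alg: "is_alg W d S lam" using ini unfolding initial_alg_def by blast
  obtain g where g: "alg_hom W d S lam ?W' d S lam g"
    using ini is_alg_lam_image[OF alg] unfolding initial_alg_def by blast
  have "?W' \<subseteq> W" using alg unfolding is_alg_def sq_hom_def by blast
  with g have "alg_hom W d S lam W d S lam g" unfolding alg_hom_def sq_hom_def by blast
  from initial_alg_endo_id[OF ini this x] have "x = g x" by simp
  also have "g x \<in> ?W'" using g x unfolding alg_hom_def sq_hom_def by blast
  finally obtain A where "A \<in> tens_car W S" "x = lam A" by blast
  then show ?thesis by (metis tens_car_elemE)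
qed

section \<open>Distances in an algebra with coordinates\<close>

context coord_alg
begin

lemma square_ms_W: "square_ms W d S"
  using alg unfolding is_alg_def by blast

lemma metric_on_W: "metric_on W d"
  using square_ms_W unfolding square_ms_def by blast

lemma S_in_W: "p \<in> M0 \<Longrightarrow> S p \<in> W"
  using square_ms_W unfolding square_ms_def by blast

lemma d_nonneg: "x \<in> W \<Longrightarrow> y \<in> W \<Longrightarrow> 0 \<le> d x y"
  using metric_on_W unfolding metric_on_def by blast

lemma d_le_2: "x \<in> W \<Longrightarrow> y \<in> W \<Longrightarrow> d x y \<le> 2"
  using square_ms_W unfolding square_ms_def by blast

lemma d_S_same_side:
  assumes "i \<in> {0, 1}" "r \<in> {0..1}" "s \<in> {0..1}"
  shows "d (S (orient b (i, r))) (S (orient b (i, s))) = \<bar>s - r\<bar>"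
proof -
  have "\<forall>i\<in>{0, 1}. \<forall>r\<in>{0..1}. \<forall>s\<in>{0..1}.
      d (S (i, r)) (S (i, s)) = \<bar>s - r\<bar> \<and> d (S (r, i)) (S (s, i)) = \<bar>s - r\<bar>"
    using square_ms_W unfolding square_ms_def by blast
  with assms have "d (S (i, r)) (S (i, s)) = \<bar>s - r\<bar> \<and> d (S (r, i)) (S (s, i)) = \<bar>s - r\<bar>"
    by blast
  then show ?thesis by (cases b) simp_all
qed

lemma lam_hom: "sq_hom (tens_car W S) (tens_dist W d S) (tens_S S) W d S lam"
  using alg unfolding is_alg_def by blast

lemma lam_in_W: "A \<in> tens_car W S \<Longrightarrow> lam A \<in> W"
  using lam_hom unfolding sq_hom_def by blast

lemma lam_short: "A \<in> tens_car W S \<Longrightarrow> B \<in> tens_car W S \<Longrightarrow> d (lam A) (lam B) \<le> tens_dist W d S A B"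
  using lam_hom unfolding sq_hom_def by blast

lemma lam_tens_S: "p \<in> M0 \<Longrightarrow> lam (tens_S S p) = S p"
  using lam_hom unfolding sq_hom_def by blast

lemma h_lam_tens_elem: "n \<in> Nset \<Longrightarrow> x \<in> W \<Longrightarrow> h (lam (tens_elem S n x)) = cell_point n (h x)"
  using h_lam[OF tens_elem_in_tens_car mem_tens_elem] unfolding tens_pos_def by simp

lemma lam_tens_elem_short:
  assumes "n \<in> Nset" "x \<in> W" "y \<in> W"
  shows "d (lam (tens_elem S n x)) (lam (tens_elem S n y)) \<le> d x y / 3"
proof -
  have "d (lam (tens_elem S n x)) (lam (tens_elem S n y))
      \<le> tens_dist W d S (tens_elem S n x) (tens_elem S n y)"
    using assms by (intro lam_short tens_elem_in_tens_car)
  also have "\<dots> \<le> base_dist d (n, x) (n, y)"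
    using assms by (intro tens_dist_le_base_dist[OF d_nonneg] mem_tens_elem) auto
  finally show ?thesis unfolding base_dist_def by simp
qed

definition grid_point :: "real \<times> real \<Rightarrow> 'a" where
  "grid_point P = lam (tens_S S P)"

lemma grid_point_cell:
  "in_cell n P \<Longrightarrow> cell_coord n P \<in> M0 \<Longrightarrow> grid_point P = lam (tens_elem S n (S (cell_coord n P)))"
  unfolding grid_point_def by (simp add: tens_S_cell)

lemma grid_point_M0: "p \<in> M0 \<Longrightarrow> grid_point p = S p"
  unfolding grid_point_def by (rule lam_tens_S)

lemma S_self_similar:
  "p \<in> M0 \<Longrightarrow> in_cell n p \<Longrightarrow> cell_coord n p \<in> M0 \<Longrightarrow> S p = lam (tens_elem S n (S (cell_coord n p)))"
  using grid_point_M0 grid_point_cell by metis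

lemma grid_point_in_W_and_h:
  assumes "on_grid P" shows "grid_point P \<in> W" "h (grid_point P) = P"
proof -
  obtain n where n: "in_cell n P" using in_cell_exists assms unfolding on_grid_def by blast
  then have M0: "cell_coord n P \<in> M0" and N: "n \<in> Nset"
    using assms on_grid_iff_cell_coord unfolding in_cell_def by blast+
  show "grid_point P \<in> W"
    unfolding grid_point_cell[OF n M0] using N M0 by (intro lam_in_W tens_elem_in_tens_car S_in_W)
  show "h (grid_point P) = P"
    unfolding grid_point_cell[OF n M0] using N M0 by (simp add: h_lam_tens_elem S_in_W h_S)
qed

lemmas grid_point_in_W = grid_point_in_W_and_h(1) and h_grid_point = grid_point_in_W_and_h(2)

text \<open>The two boundary points at height \<open>t\<close> on opposite sides are the images of points
  in one row of three cells, glued along the two inner edges; each cell contributes a third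
  of the distance between the opposite sides at height \<open>3t - j\<close>.\<close>

lemma lam_crossing_short:
  assumes j: "j \<in> {0, 1, 2}" and t: "t \<in> {0..1}"
  shows "d (lam (tens_elem S (orient b (0, j)) (S (orient b (0, t)))))
           (lam (tens_elem S (orient b (2, j)) (S (orient b (1, t)))))
         \<le> d (S (orient b (0, t))) (S (orient b (1, t)))"
proof -
  define p where "p i = (orient b (i, j), S (orient b (0, t)))" for i :: nat
  define q where "q i = (orient b (i, j), S (orient b (1, t)))" for i :: nat
  have M: "orient b (0, t) \<in> M0" "orient b (1, t) \<in> M0"
    using t unfolding M0_orient by (simp_all add: M0_def)
  have W: "S (orient b (0, t)) \<in> W" "S (orient b (1, t)) \<in> W" using S_in_W M by auto
  have N: "orient b (i, j) \<in> Nset" if "i < 3" for i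
  proof -
    have "i \<in> {0, 1, 2}" using that by auto
    with j have "(i, j) \<in> Nset" unfolding Nset_def by blast
    then show ?thesis by simp
  qed
  have pq: "\<forall>i<3. p i \<in> Nset \<times> W \<and> q i \<in> Nset \<times> W"
    using N W unfolding p_def q_def by auto
  have glue: "(q i, p (Suc i)) \<in> tens_eq S" if "Suc i < 3" for i
  proof -
    have "cell_point (i, j) (1, t) = cell_point (Suc i, j) (0, t)"
      unfolding cell_point_eq_iff by simp
    then have "cell_point (orient b (i, j)) (orient b (1, t))
        = cell_point (orient b (Suc i, j)) (orient b (0, t))"
      by (simp add: cell_point_orient)
    then show ?thesis
      unfolding p_def q_def using that N M by (intro tens_eq_glue) auto
  qed
  have "d (lam (tens_elem S (orient b (0, j)) (S (orient b (0, t)))))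
          (lam (tens_elem S (orient b (2, j)) (S (orient b (1, t)))))
      \<le> tens_dist W d S (tens_elem S (orient b (0, j)) (S (orient b (0, t))))
          (tens_elem S (orient b (2, j)) (S (orient b (1, t))))"
    using N W by (intro lam_short tens_elem_in_tens_car) auto
  also have "\<dots> \<le> (\<Sum>i<3. base_dist d (p i) (q i))"
    using pq glue by (intro tens_dist_le_chain[OF d_nonneg]) (auto simp: p_def q_def mem_tens_elem)
  also have "\<dots> = d (S (orient b (0, t))) (S (orient b (1, t)))"
    unfolding p_def q_def base_dist_def by (simp add: numeral_3_eq_3)
  finally show ?thesis .
qed

lemma d_S_opposite_triadic_le_1:
  "i \<le> 3 ^ k \<Longrightarrow> d (S (orient b (0, real i / 3 ^ k))) (S (orient b (1, real i / 3 ^ k))) \<le> 1"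
proof (induction k arbitrary: i)
  case 0
  then have "real i \<in> {0, 1}" by auto
  then show ?case using d_S_same_side[of _ 0 1 "\<not> b"] by (simp add: orient_Not)
next
  case (Suc k)
  obtain j i' where ji: "j \<le> (2::nat)" "i' \<le> 3 ^ k" "i = j * 3 ^ k + i'"
  proof -
    consider "i < 3 ^ k" | "3 ^ k \<le> i \<and> i < 2 * 3 ^ k" | "2 * 3 ^ k \<le> i" by linarith
    then show ?thesis
    proof cases
      case 1 then show ?thesis using that[of 0 i] by auto
    next
      case 2 then show ?thesis using that[of 1 "i - 3 ^ k"] by auto
    next
      case 3 then show ?thesis using that[of 2 "i - 2 * 3 ^ k"] Suc.prems by auto
    qed
  qed
  define t t' where "t = real i / 3 ^ Suc k" and "t' = real i' / 3 ^ k"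
  have t't: "t' = 3 * t - real j" unfolding t_def t'_def ji(3) by (simp add: field_simps)
  have t': "t' \<in> {0..1}" unfolding t'_def using ji(2) by (auto simp: field_simps)
  then have t: "t \<in> {0..1}" using t't ji(1) by auto
  have jN: "j \<in> {0, 1, 2}" using ji(1) by auto
  have cells: "in_cell (0, j) (0, t)" "in_cell (2, j) (1, t)"
    and coords: "cell_coord (0, j) (0, t) = (0, t')" "cell_coord (2, j) (1, t) = (1, t')"
    using jN t t' t't unfolding in_cell_def Nset_def U0_def cell_coord_def by auto
  have M: "(0, t) \<in> M0" "(1, t) \<in> M0" "(0, t') \<in> M0" "(1, t') \<in> M0"
    using t t' unfolding M0_def by auto
  have "S (orient b (0, t)) = lam (tens_elem S (orient b (0, j)) (S (orient b (0, t'))))"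
    using S_self_similar[of "orient b (0, t)" "orient b (0, j)"] cells coords M
    by (simp add: in_cell_orient cell_coord_orient)
  moreover have "S (orient b (1, t)) = lam (tens_elem S (orient b (2, j)) (S (orient b (1, t'))))"
    using S_self_similar[of "orient b (1, t)" "orient b (2, j)"] cells coords M
    by (simp add: in_cell_orient cell_coord_orient)
  ultimately have "d (S (orient b (0, t))) (S (orient b (1, t)))
      \<le> d (S (orient b (0, t'))) (S (orient b (1, t')))"
    using lam_crossing_short[OF jN t'] by simp
  also have "\<dots> \<le> 1" unfolding t'_def by (rule Suc.IH[OF ji(2)])
  finally show ?case unfolding t_def .
qed

lemma d_S_opposite_sides:
  assumes t: "t \<in> {0..1}" and s: "s \<in> {0..1}"
  shows "d (S (orient b (0, t))) (S (orient b (1, s))) \<le> 1 + \<bar>t - s\<bar>"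
proof (rule le_of_le_geometric[where c = 2 and r = "1/3"])
  fix k :: nat
  obtain i where i: "i \<le> 3 ^ k" "\<bar>t - real i / 3 ^ k\<bar> \<le> (1/3) ^ k"
    using triadic_approx t by auto
  define g where "g = real i / 3 ^ k"
  have g: "g \<in> {0..1}" unfolding g_def using i(1) by (auto simp: field_simps)
  have "orient b (0, t) \<in> M0" "orient b (1, s) \<in> M0" "orient b (0, g) \<in> M0" "orient b (1, g) \<in> M0"
    using t s g unfolding M0_orient by (simp_all add: M0_def)
  then have W: "S (orient b (0, t)) \<in> W" "S (orient b (1, s)) \<in> W"
    "S (orient b (0, g)) \<in> W" "S (orient b (1, g)) \<in> W" using S_in_W by auto
  have "d (S (orient b (0, t))) (S (orient b (1, s)))
      \<le> d (S (orient b (0, t))) (S (orient b (0, g)))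
        + d (S (orient b (0, g))) (S (orient b (1, g)))
        + d (S (orient b (1, g))) (S (orient b (1, s)))"
    using metric_on_triangle[OF metric_on_W W(1,3,2)] metric_on_triangle[OF metric_on_W W(3,4,2)]
    by linarith
  also have "\<dots> \<le> \<bar>g - t\<bar> + 1 + \<bar>s - g\<bar>"
    using d_S_same_side t s g d_S_opposite_triadic_le_1[OF i(1)] unfolding g_def
    by (intro add_mono) simp_all
  also have "\<dots> \<le> 1 + \<bar>t - s\<bar> + 2 * (1/3) ^ k"
    using i(2) unfolding g_def by arith
  finally show "d (S (orient b (0, t))) (S (orient b (1, s))) \<le> 1 + \<bar>t - s\<bar> + 2 * (1/3) ^ k" .
qed simp_all

lemma d_S_le_taxicab:
  assumes u: "u \<in> M0" and v: "v \<in> M0"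
  shows "d (S u) (S v) \<le> taxicab u v"
proof -
  obtain b i r where i: "i \<in> {0, 1}" and r: "r \<in> {0..1}" and u_eq: "u = orient b (i, r)"
    using u M0_iff_orient by blast
  obtain b' i' r' where i': "i' \<in> {0, 1}" and r': "r' \<in> {0..1}" and v_eq: "v = orient b' (i', r')"
    using v M0_iff_orient by blast
  have W: "S u \<in> W" "S v \<in> W" using S_in_W u v by auto
  show ?thesis
  proof (cases "b' = b")
    case True
    consider "i' = i" | "i = 0 \<and> i' = 1" | "i = 1 \<and> i' = 0" using i i' by auto
    then show ?thesis
    proof cases
      case 1
      then show ?thesis using d_S_same_side[OF i r r'] u_eq v_eq True
        by (simp add: abs_minus_commute)
    next
      case 2
      then show ?thesis using d_S_opposite_sides[OF r r', of b] u_eq v_eq True by simp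
    next
      case 3
      then show ?thesis
        using d_S_opposite_sides[OF r' r, of b] metric_on_commute[OF metric_on_W W] u_eq v_eq True
        by (simp add: abs_minus_commute)
    qed
  next
    case False
    then have b': "b' = (\<not> b)" by auto
    define c where "c = orient b (i, i')"
    have c': "c = orient b' (i', i)" unfolding c_def b' by (simp add: orient_Not)
    have ir: "i \<in> {0..1}" "i' \<in> {0..1}" using i i' by auto
    have "c \<in> M0" unfolding c_def using M0_iff_orient i ir by blast
    then have Wc: "S c \<in> W" by (rule S_in_W)
    have "d (S u) (S v) \<le> d (S u) (S c) + d (S c) (S v)"
      using metric_on_triangle[OF metric_on_W W(1) Wc W(2)] .
    also have "d (S u) (S c) = \<bar>i' - r\<bar>" unfolding u_eq c_def using d_S_same_side[OF i r ir(2)] .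
    also have "d (S c) (S v) = \<bar>r' - i\<bar>" unfolding v_eq c' using d_S_same_side[OF i' ir(1) r'] .
    finally show ?thesis
      unfolding u_eq v_eq b' orient_Not by (simp add: abs_minus_commute add.commute)
  qed
qed

lemma grid_point_short_in_cell:
  assumes "on_grid P" "on_grid Q" and n: "in_cell n P" "in_cell n Q"
  shows "d (grid_point P) (grid_point Q) \<le> taxicab P Q"
proof -
  have M: "cell_coord n P \<in> M0" "cell_coord n Q \<in> M0"
    using on_grid_iff_cell_coord assms by blast+
  have N: "n \<in> Nset" using n unfolding in_cell_def by blast
  have "d (grid_point P) (grid_point Q)
      = d (lam (tens_elem S n (S (cell_coord n P)))) (lam (tens_elem S n (S (cell_coord n Q))))"
    using grid_point_cell n M by simp
  also have "\<dots> \<le> d (S (cell_coord n P)) (S (cell_coord n Q)) / 3"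
    using N M by (intro lam_tens_elem_short S_in_W)
  also have "\<dots> \<le> taxicab (cell_coord n P) (cell_coord n Q) / 3"
    using d_S_le_taxicab[OF M] by (simp add: divide_right_mono)
  also have "\<dots> = taxicab P Q" by (simp add: taxicab_cell_coord)
  finally show ?thesis .
qed

lemma grid_point_segment:
  assumes P: "on_grid (orient b (x, y))" and Q: "on_grid (orient b (x', y))"
  shows "d (grid_point (orient b (x, y))) (grid_point (orient b (x', y))) \<le> \<bar>x - x'\<bar>"
proof -
  let ?D = "{z. on_grid (orient b (z, y))}"
  have "on_grid (x, y)" using P on_grid_orient by blast
  then have y: "y \<in> {0..1}" unfolding on_grid_def U0_def by auto
  have D: "?D \<subseteq> {0..1}"
  proof
    fix z assume "z \<in> ?D"
    then have "on_grid (z, y)" using on_grid_orient by auto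
    then show "z \<in> {0..1}" unfolding on_grid_def U0_def by auto
  qed
  have "on_grid (1/3, y)" "on_grid (2/3, y)" using y unfolding on_grid_def U0_def thirds_def by auto
  then have thirds: "1/3 \<in> ?D" "2/3 \<in> ?D" using on_grid_orient by auto
  show ?thesis
  proof (rule dist_le_if_le_on_thirds[where f = "\<lambda>z. grid_point (orient b (z, y))" and D = ?D,
        OF metric_on_W])
    show "(\<lambda>z. grid_point (orient b (z, y))) ` ?D \<subseteq> W" by (blast intro: grid_point_in_W)
  next
    fix i z z' assume i: "i \<in> {0, 1, 2::nat}" and z: "z \<in> ?D" "z' \<in> ?D"
      and cell: "z \<in> {real i / 3..(real i + 1) / 3}" "z' \<in> {real i / 3..(real i + 1) / 3}"
    obtain j :: nat where "j \<in> {0, 1, 2}" "real j / 3 \<le> y" "y \<le> (real j + 1) / 3"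
      using third_exists y by auto
    with i cell have "in_cell (i, j) (z, y)" "in_cell (i, j) (z', y)"
      unfolding in_cell_iff Nset_def by auto
    then have "in_cell (orient b (i, j)) (orient b (z, y))"
      and "in_cell (orient b (i, j)) (orient b (z', y))"
      by (simp_all add: in_cell_orient)
    with z have "d (grid_point (orient b (z, y))) (grid_point (orient b (z', y)))
        \<le> taxicab (orient b (z, y)) (orient b (z', y))"
      by (intro grid_point_short_in_cell) auto
    then show "d (grid_point (orient b (z, y))) (grid_point (orient b (z', y))) \<le> \<bar>z - z'\<bar>"
      by simp
  qed (use D thirds P Q in auto)
qed

lemma grid_point_short:
  assumes P: "on_grid P" and Q: "on_grid Q"
  shows "d (grid_point P) (grid_point Q) \<le> taxicab P Q"
proof -
  obtain b x y where y: "y \<in> thirds" and P_eq: "P = orient b (x, y)"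
    using P on_grid_iff_orient by blast
  obtain x' y' where Q_eq: "Q = orient b (x', y')"
    by (metis orient_orient surj_pair)
  define R where "R = orient b (x', y)"
  have "on_grid (x', y')" using Q on_grid_orient unfolding Q_eq by blast
  then have "on_grid (x', y)" using y unfolding on_grid_def U0_def thirds_def by auto
  then have R: "on_grid R" unfolding R_def using on_grid_orient by blast
  have R': "R = orient (\<not> b) (y, x')" and Q': "Q = orient (\<not> b) (y', x')"
    unfolding R_def Q_eq by (simp_all add: orient_Not)
  have "d (grid_point P) (grid_point Q)
      \<le> d (grid_point P) (grid_point R) + d (grid_point R) (grid_point Q)"
    using grid_point_in_W P Q R by (intro metric_on_triangle[OF metric_on_W])
  also have "d (grid_point P) (grid_point R) \<le> \<bar>x - x'\<bar>"
    using grid_point_segment P R unfolding P_eq R_def by blast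
  also have "d (grid_point R) (grid_point Q) \<le> \<bar>y - y'\<bar>"
    using grid_point_segment R Q unfolding R' Q' by blast
  finally show ?thesis unfolding P_eq Q_eq by simp
qed

lemma triadic_density: "p \<in> U0 \<Longrightarrow> \<exists>w\<in>W. taxicab (h w) p \<le> 2 * (1/3) ^ k"
proof (induction k arbitrary: p)
  case 0
  have "(0, 0) \<in> M0" unfolding M0_def by simp
  then have "S (0, 0) \<in> W" "h (S (0, 0)) = (0, 0)" using S_in_W h_S by auto
  moreover have "(0, 0) \<in> U0" unfolding U0_def by simp
  ultimately have "taxicab (h (S (0, 0))) p \<le> 2" using taxicab_le_2 0 by simp
  with \<open>S (0, 0) \<in> W\<close> show ?case by auto
next
  case (Suc k)
  obtain n where n: "in_cell n p" using in_cell_exists Suc.prems by blast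
  then have N: "n \<in> Nset" and c: "cell_coord n p \<in> U0" unfolding in_cell_def by blast+
  obtain w where w: "w \<in> W" "taxicab (h w) (cell_coord n p) \<le> 2 * (1/3) ^ k"
    using Suc.IH[OF c] by blast
  have "taxicab (h (lam (tens_elem S n w))) p = taxicab (h w) (cell_coord n p) / 3"
    using h_lam_tens_elem[OF N w(1)] taxicab_cell_point[of n "h w" "cell_coord n p"] by simp
  with w(2) have "taxicab (h (lam (tens_elem S n w))) p \<le> 2 * (1/3) ^ Suc k" by simp
  moreover have "lam (tens_elem S n w) \<in> W" using N w(1) by (intro lam_in_W tens_elem_in_tens_car)
  ultimately show ?case by blast
qed

lemma dense: "p \<in> U0 \<Longrightarrow> 0 < \<epsilon> \<Longrightarrow> \<exists>w\<in>W. taxicab (h w) p < \<epsilon>"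
proof -
  assume p: "p \<in> U0" and "0 < \<epsilon>"
  then obtain k where k: "(1/3::real) ^ k < \<epsilon> / 2" using real_arch_pow_inv[of "\<epsilon> / 2" "1/3"] by auto
  obtain w where "w \<in> W" "taxicab (h w) p \<le> 2 * (1/3) ^ k" using triadic_density[OF p] by blast
  with k show ?thesis by force
qed

end

locale surj_coord_alg = coord_alg +
  assumes lam_surj: "x \<in> W \<Longrightarrow> \<exists>n\<in>Nset. \<exists>x'\<in>W. x = lam (tens_elem S n x')"
begin

lemma d_to_grid_point:
  assumes n: "n \<in> Nset" and x: "x \<in> W" and P: "in_cell n P" "cell_coord n P \<in> M0"
    and e: "\<And>x y. x \<in> W \<Longrightarrow> y \<in> W \<Longrightarrow> d x y \<le> taxicab (h x) (h y) + e"
  shows "d (lam (tens_elem S n x)) (grid_point P) \<le> taxicab (h (lam (tens_elem S n x))) P + e / 3"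
proof -
  have SW: "S (cell_coord n P) \<in> W" using S_in_W P(2) .
  have "d (lam (tens_elem S n x)) (grid_point P)
      = d (lam (tens_elem S n x)) (lam (tens_elem S n (S (cell_coord n P))))"
    using grid_point_cell[OF P] by simp
  also have "\<dots> \<le> d x (S (cell_coord n P)) / 3" using lam_tens_elem_short[OF n x SW] .
  also have "\<dots> \<le> (taxicab (h x) (cell_coord n P) + e) / 3"
    using e[OF x SW] h_S[OF P(2)] by (simp add: divide_right_mono)
  also have "taxicab (h x) (cell_coord n P) = 3 * taxicab (h (lam (tens_elem S n x))) P"
    using taxicab_cell_coord[of n "h (lam (tens_elem S n x))" P] h_lam_tens_elem[OF n x] by simp
  finally show ?thesis by simp
qed

text \<open>Write \<open>x\<close> and \<open>y\<close> as images under \<open>lam\<close> of points in cells \<open>m\<close> and \<open>n\<close>. If the cells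
  differ, a taxicab geodesic from \<open>h x\<close> to \<open>h y\<close> leaves cell \<open>m\<close> at a grid point \<open>P\<close> and enters
  cell \<open>n\<close> at a grid point \<open>Q\<close>: the excess \<open>e\<close> is divided by three inside the end cells and
  vanishes between grid points.\<close>

lemma excess_contracts:
  assumes e: "\<And>x y. x \<in> W \<Longrightarrow> y \<in> W \<Longrightarrow> d x y \<le> taxicab (h x) (h y) + e" and "0 \<le> e"
    and x: "x \<in> W" and y: "y \<in> W"
  shows "d x y \<le> taxicab (h x) (h y) + 2 / 3 * e"
proof -
  obtain m x' where m: "m \<in> Nset" and x': "x' \<in> W" and x_eq: "x = lam (tens_elem S m x')"
    using lam_surj[OF x] by blast
  obtain n y' where n: "n \<in> Nset" and y': "y' \<in> W" and y_eq: "y = lam (tens_elem S n y')"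
    using lam_surj[OF y] by blast
  define X Y where "X = h x" and "Y = h y"
  have X_eq: "X = cell_point m (h x')" and Y_eq: "Y = cell_point n (h y')"
    unfolding X_def Y_def x_eq y_eq using h_lam_tens_elem m n x' y' by auto
  then have X: "in_cell m X" and Y: "in_cell n Y"
    using m n x' y' h_in_U0 in_cell_cell_point by auto
  show ?thesis
  proof (cases "m = n")
    case True
    have "d x y \<le> d x' y' / 3" using lam_tens_elem_short[OF m x' y'] x_eq y_eq True by simp
    also have "\<dots> \<le> (taxicab (h x') (h y') + e) / 3" using e[OF x' y']
      by (simp add: divide_right_mono)
    also have "taxicab (h x') (h y') = 3 * taxicab X Y"
      unfolding X_eq Y_eq True taxicab_cell_point by simp
    finally show ?thesis using \<open>0 \<le> e\<close> unfolding X_def Y_def by simp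
  next
    case False
    obtain P where P: "in_cell m P" "cell_coord m P \<in> M0"
      and XPY: "taxicab X P + taxicab P Y = taxicab X Y"
      using exists_boundary_point_between[OF X Y False] by blast
    obtain Q where Q: "in_cell n Q" "cell_coord n Q \<in> M0"
      and YQP: "taxicab Y Q + taxicab Q P = taxicab Y P"
      using exists_boundary_point_between[OF Y P(1)] False by metis
    have grid: "on_grid P" "on_grid Q" using on_grid_iff_cell_coord P Q by blast+
    have W: "grid_point P \<in> W" "grid_point Q \<in> W" using grid_point_in_W grid by auto
    have "d x y \<le> d x (grid_point P) + d (grid_point P) (grid_point Q) + d (grid_point Q) y"
      using metric_on_triangle[OF metric_on_W x W(1) y] metric_on_triangle[OF metric_on_W W y]
      by linarith
    moreover have "d x (grid_point P) \<le> taxicab X P + e / 3"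
      using d_to_grid_point[OF m x' P e] unfolding X_def x_eq .
    moreover have "d (grid_point P) (grid_point Q) \<le> taxicab P Q" using grid_point_short grid
      by blast
    moreover have "d (grid_point Q) y \<le> taxicab Y Q + e / 3"
      using d_to_grid_point[OF n y' Q e] metric_on_commute[OF metric_on_W y W(2)]
        unfolding Y_def y_eq by simp
    moreover have "taxicab X P + taxicab P Q + taxicab Y Q = taxicab X Y"
      using XPY YQP taxicab_commute[of P Q] taxicab_commute[of P Y] by linarith
    ultimately show ?thesis unfolding X_def Y_def by linarith
  qed
qed

lemma d_eq_taxicab:
  assumes "x \<in> W" "y \<in> W" shows "d x y = taxicab (h x) (h y)"
proof -
  have "\<forall>x\<in>W. \<forall>y\<in>W. d x y \<le> taxicab (h x) (h y) + 2 * (2/3) ^ k" for k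
  proof (induction k)
    case 0
    show ?case
    proof (intro ballI)
      fix x y assume "x \<in> W" "y \<in> W"
      then have "d x y \<le> 2" "0 \<le> taxicab (h x) (h y)" using d_le_2 taxicab_nonneg by auto
      then show "d x y \<le> taxicab (h x) (h y) + 2 * (2/3) ^ 0" by simp
    qed
  next
    case (Suc k)
    show ?case
    proof (intro ballI)
      fix x y assume "x \<in> W" "y \<in> W"
      have "d x y \<le> taxicab (h x) (h y) + 2 / 3 * (2 * (2/3) ^ k)"
        using Suc.IH by (intro excess_contracts \<open>x \<in> W\<close> \<open>y \<in> W\<close>) auto
      then show "d x y \<le> taxicab (h x) (h y) + 2 * (2/3) ^ Suc k" by simp
    qed
  qed
  then have "\<And>k. d x y \<le> taxicab (h x) (h y) + 2 * (2/3) ^ k" using assms by blast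
  then have "d x y \<le> taxicab (h x) (h y)" by (rule le_of_le_geometric) simp_all
  with h_short[OF assms] show ?thesis by simp
qed

end

section \<open>The completion of a dense subspace of the square\<close>

locale dense_in_square =
  fixes W :: "'a set" and d :: "'a \<Rightarrow> 'a \<Rightarrow> real" and S :: "real \<times> real \<Rightarrow> 'a"
    and h :: "'a \<Rightarrow> real \<times> real"
  assumes h_in_U0: "x \<in> W \<Longrightarrow> h x \<in> U0"
    and d_eq: "x \<in> W \<Longrightarrow> y \<in> W \<Longrightarrow> d x y = taxicab (h x) (h y)"
    and dense: "p \<in> U0 \<Longrightarrow> 0 < \<epsilon> \<Longrightarrow> \<exists>w\<in>W. taxicab (h w) p < \<epsilon>"
    and S_in_W: "p \<in> M0 \<Longrightarrow> S p \<in> W"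
    and h_S: "p \<in> M0 \<Longrightarrow> h (S p) = p"
begin

definition lim_h :: "(nat \<Rightarrow> 'a) \<Rightarrow> real \<times> real" where
  "lim_h \<sigma> = lim (\<lambda>n. h (\<sigma> n))"

lemma cauchy_seqs_lim_h:
  assumes "\<sigma> \<in> cauchy_seqs W d"
  shows "(\<lambda>n. h (\<sigma> n)) \<longlonglongrightarrow> lim_h \<sigma>" "lim_h \<sigma> \<in> U0"
proof -
  have W: "\<sigma> n \<in> W" for n using assms unfolding cauchy_seqs_def by blast
  have "Cauchy (\<lambda>n. h (\<sigma> n))"
  proof (rule metric_CauchyI)
    fix \<epsilon> :: real assume "0 < \<epsilon>"
    then obtain N where N: "\<forall>m\<ge>N. \<forall>n\<ge>N. d (\<sigma> m) (\<sigma> n) < \<epsilon>"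
      using assms unfolding cauchy_seqs_def by blast
    have "dist (h (\<sigma> m)) (h (\<sigma> n)) < \<epsilon>" if "N \<le> m" "N \<le> n" for m n
      using dist_le_taxicab[of "h (\<sigma> m)" "h (\<sigma> n)"] d_eq[OF W W, of m n] N[rule_format, OF that]
      by linarith
    then show "\<exists>M. \<forall>m\<ge>M. \<forall>n\<ge>M. dist (h (\<sigma> m)) (h (\<sigma> n)) < \<epsilon>" by blast
  qed
  then show lim: "(\<lambda>n. h (\<sigma> n)) \<longlonglongrightarrow> lim_h \<sigma>"
    unfolding lim_h_def Cauchy_convergent_iff convergent_LIMSEQ_iff .
  show "lim_h \<sigma> \<in> U0" using closed_sequentially[OF closed_U0 h_in_U0[OF W] lim] .
qed

lemma cauchy_seqs_if_convergent:
  assumes W: "\<And>n. \<sigma> n \<in> W" and lim: "(\<lambda>n. h (\<sigma> n)) \<longlonglongrightarrow> p"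
  shows "\<sigma> \<in> cauchy_seqs W d"
proof -
  have "\<exists>N. \<forall>m\<ge>N. \<forall>n\<ge>N. d (\<sigma> m) (\<sigma> n) < \<epsilon>" if "0 < \<epsilon>" for \<epsilon>
  proof -
    have "Cauchy (\<lambda>n. h (\<sigma> n))" using lim by (rule LIMSEQ_imp_Cauchy)
    then obtain N where N: "\<forall>m\<ge>N. \<forall>n\<ge>N. dist (h (\<sigma> m)) (h (\<sigma> n)) < \<epsilon> / 2"
      using metric_CauchyD \<open>0 < \<epsilon>\<close> half_gt_zero by blast
    have "d (\<sigma> m) (\<sigma> n) < \<epsilon>" if "N \<le> m" "N \<le> n" for m n
      using taxicab_le_2_dist[of "h (\<sigma> m)" "h (\<sigma> n)"] d_eq[OF W W, of m n] N[rule_format, OF that]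
      by linarith
    then show ?thesis by blast
  qed
  with W show ?thesis unfolding cauchy_seqs_def by blast
qed

lemma ceq_eq_lim_h:
  "ceq W d = {(\<sigma>, \<tau>). \<sigma> \<in> cauchy_seqs W d \<and> \<tau> \<in> cauchy_seqs W d \<and> lim_h \<sigma> = lim_h \<tau>}"
proof -
  have "(\<lambda>n. d (\<sigma> n) (\<tau> n)) \<longlonglongrightarrow> 0 \<longleftrightarrow> lim_h \<sigma> = lim_h \<tau>"
    if "\<sigma> \<in> cauchy_seqs W d" "\<tau> \<in> cauchy_seqs W d" for \<sigma> \<tau>
  proof -
    have W: "\<sigma> n \<in> W" "\<tau> n \<in> W" for n using that unfolding cauchy_seqs_def by blast+
    have "(\<lambda>n. d (\<sigma> n) (\<tau> n)) \<longlonglongrightarrow> taxicab (lim_h \<sigma>) (lim_h \<tau>)"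
      unfolding d_eq[OF W] using cauchy_seqs_lim_h(1)[OF that(1)] cauchy_seqs_lim_h(1)[OF that(2)]
      by (rule tendsto_taxicab)
    then show ?thesis using LIMSEQ_unique taxicab_eq_0_iff by metis
  qed
  then show ?thesis unfolding ceq_def by auto
qed

lemma equiv_ceq: "equiv (cauchy_seqs W d) (ceq W d)"
  unfolding ceq_eq_lim_h by (intro equivI refl_onI symI transI) auto

lemma C_car_some_representative:
  assumes "A \<in> C_car W d"
  shows "(SOME \<sigma>. \<sigma> \<in> A) \<in> cauchy_seqs W d" "A = ceq W d `` {SOME \<sigma>. \<sigma> \<in> A}"
proof -
  from assms obtain \<sigma> where A: "A = ceq W d `` {\<sigma>}" and "\<sigma> \<in> cauchy_seqs W d"
    unfolding C_car_def by (rule quotientE)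
  then have "\<sigma> \<in> A" using equiv_class_self[OF equiv_ceq] by blast
  then have "(SOME \<sigma>. \<sigma> \<in> A) \<in> A" by (rule someI[where P = "\<lambda>\<sigma>. \<sigma> \<in> A"])
  then have rel: "(\<sigma>, SOME \<sigma>. \<sigma> \<in> A) \<in> ceq W d" using A by simp
  then show "(SOME \<sigma>. \<sigma> \<in> A) \<in> cauchy_seqs W d" unfolding ceq_def by blast
  show "A = ceq W d `` {SOME \<sigma>. \<sigma> \<in> A}" using A equiv_class_eq[OF equiv_ceq rel] by simp
qed

definition approx_seq :: "real \<times> real \<Rightarrow> nat \<Rightarrow> 'a" where
  "approx_seq p n = (SOME w. w \<in> W \<and> taxicab (h w) p < 1 / real (Suc n))"

lemma approx_seq_converges:
  assumes "p \<in> U0"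
  shows "approx_seq p \<in> cauchy_seqs W d" "lim_h (approx_seq p) = p"
proof -
  have "\<exists>w. w \<in> W \<and> taxicab (h w) p < 1 / real (Suc n)" for n
    using dense[OF assms, of "1 / real (Suc n)"] by auto
  then have "approx_seq p n \<in> W \<and> taxicab (h (approx_seq p n)) p < 1 / real (Suc n)" for n
    unfolding approx_seq_def by (rule someI_ex)
  then have W: "\<And>n. approx_seq p n \<in> W"
    and near: "\<forall>n. norm (taxicab (h (approx_seq p n)) p) \<le> inverse (real (Suc n))"
    using taxicab_nonneg by (auto simp: inverse_eq_divide less_imp_le)
  have "(\<lambda>n. taxicab (h (approx_seq p n)) p) \<longlonglongrightarrow> 0"
    using Lim_null_comparison[OF always_eventually[OF near] LIMSEQ_inverse_real_of_nat] .
  then have lim: "(\<lambda>n. h (approx_seq p n)) \<longlonglongrightarrow> p" by (simp add: tendsto_iff_taxicab)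
  show "approx_seq p \<in> cauchy_seqs W d" using W lim by (rule cauchy_seqs_if_convergent)
  show "lim_h (approx_seq p) = p" unfolding lim_h_def using lim by (rule limI)
qed

definition to_U0 :: "(nat \<Rightarrow> 'a) set \<Rightarrow> real \<times> real" where
  "to_U0 A = lim_h (SOME \<sigma>. \<sigma> \<in> A)"

definition from_U0 :: "real \<times> real \<Rightarrow> (nat \<Rightarrow> 'a) set" where
  "from_U0 p = ceq W d `` {approx_seq p}"

lemma to_U0_in_U0: "A \<in> C_car W d \<Longrightarrow> to_U0 A \<in> U0"
  unfolding to_U0_def using C_car_some_representative cauchy_seqs_lim_h(2) by blast

lemma from_U0_in_C_car: "p \<in> U0 \<Longrightarrow> from_U0 p \<in> C_car W d"
  unfolding from_U0_def C_car_def using approx_seq_converges(1) by (rule quotientI)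

lemma class_eq_iff_lim_h_eq:
  "\<sigma> \<in> cauchy_seqs W d \<Longrightarrow> \<tau> \<in> cauchy_seqs W d \<Longrightarrow> ceq W d `` {\<sigma>} = ceq W d `` {\<tau>} \<longleftrightarrow> lim_h \<sigma> = lim_h \<tau>"
  using eq_equiv_class_iff[OF equiv_ceq] unfolding ceq_eq_lim_h by auto

lemma to_U0_from_U0: "p \<in> U0 \<Longrightarrow> to_U0 (from_U0 p) = p"
  using C_car_some_representative[OF from_U0_in_C_car] approx_seq_converges class_eq_iff_lim_h_eq
  unfolding to_U0_def from_U0_def by metis

lemma from_U0_to_U0: "A \<in> C_car W d \<Longrightarrow> from_U0 (to_U0 A) = A"
  using C_car_some_representative approx_seq_converges to_U0_in_U0 class_eq_iff_lim_h_eq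
  unfolding to_U0_def from_U0_def by metis

lemma C_dist_eq: "A \<in> C_car W d \<Longrightarrow> B \<in> C_car W d \<Longrightarrow> C_dist d A B = taxicab (to_U0 A) (to_U0 B)"
proof -
  assume A: "A \<in> C_car W d" and B: "B \<in> C_car W d"
  let ?\<sigma> = "SOME \<sigma>. \<sigma> \<in> A" and ?\<tau> = "SOME \<tau>. \<tau> \<in> B"
  have c: "?\<sigma> \<in> cauchy_seqs W d" "?\<tau> \<in> cauchy_seqs W d"
    using C_car_some_representative A B by blast+
  then have W: "?\<sigma> n \<in> W" "?\<tau> n \<in> W" for n unfolding cauchy_seqs_def by blast+
  have "(\<lambda>n. d (?\<sigma> n) (?\<tau> n)) \<longlonglongrightarrow> taxicab (to_U0 A) (to_U0 B)"
    unfolding d_eq[OF W] to_U0_def using cauchy_seqs_lim_h(1)[OF c(1)] cauchy_seqs_lim_h(1)[OF c(2)]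
    by (rule tendsto_taxicab)
  then show ?thesis unfolding C_dist_def by (rule limI)
qed

lemma C_S_eq_from_U0: "p \<in> M0 \<Longrightarrow> C_S W d S p = from_U0 p"
proof -
  assume p: "p \<in> M0"
  have c: "(\<lambda>n. S p) \<in> cauchy_seqs W d"
    using S_in_W[OF p] by (intro cauchy_seqs_if_convergent[where p = p]) (auto simp: h_S[OF p])
  have lim: "lim_h (\<lambda>n. S p) = p" unfolding lim_h_def h_S[OF p] by simp
  have "p \<in> U0" using p M0_subset_U0 by blast
  then show ?thesis unfolding C_S_def from_U0_def
    using class_eq_iff_lim_h_eq[OF c approx_seq_converges(1)] approx_seq_converges(2) lim by simp
qed

lemma completion_isomorphic_U0:
  "sq_isomorphic (C_car W d) (C_dist d) (C_S W d S) U0 taxicab (\<lambda>p. p)"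
  unfolding sq_isomorphic_def
proof (intro exI conjI)
  show "sq_hom (C_car W d) (C_dist d) (C_S W d S) U0 taxicab (\<lambda>p. p) to_U0"
    unfolding sq_hom_def using to_U0_in_U0 C_dist_eq C_S_eq_from_U0 to_U0_from_U0 M0_subset_U0
    by auto
  show "sq_hom U0 taxicab (\<lambda>p. p) (C_car W d) (C_dist d) (C_S W d S) from_U0"
    unfolding sq_hom_def using from_U0_in_C_car C_dist_eq to_U0_from_U0 C_S_eq_from_U0 by auto
  show "\<forall>A\<in>C_car W d. from_U0 (to_U0 A) = A" using from_U0_to_U0 by blast
  show "\<forall>p\<in>U0. to_U0 (from_U0 p) = p" using to_U0_from_U0 by blast
qed

end

theorem mainTheorem9:
  fixes W :: "'a set" and d :: "'a \<Rightarrow> 'a \<Rightarrow> real" and S :: "real \<times> real \<Rightarrow> 'a"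
    and lam :: "((nat \<times> nat) \<times> 'a) set \<Rightarrow> 'a"
  assumes "initial_alg W d S lam"
  shows "sq_isomorphic (C_car W d) (C_dist d) (C_S W d S) U0 taxicab (\<lambda>p. p)"
proof -
  obtain h where "coord_alg W d S lam h" using initial_alg_coord_alg[OF assms] by blast
  then interpret coord_alg W d S lam h .
  interpret surj_coord_alg W d S lam h
    by unfold_locales (rule initial_alg_lam_surj[OF assms])
  interpret dense_in_square W d S h
    by unfold_locales (auto intro: h_in_U0 d_eq_taxicab dense S_in_W h_S)
  show ?thesis by (rule completion_isomorphic_U0)
qed

end
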